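(* A graph $G$ is a polar-cat if and only if $G$ can be explained by a labeled network that is strong, elementary and quasi-discriminating.
   Context: Graphs finite, simple, undirected; $G-v$, join, cograph (no induced $P_4$). Network on finite $X$: a DAG $N=(V,E)$ with either $V=X=\{x\}$, or (N1) unique root $\rho_N$ of indegree 0, outdegree $\ge2$; (N2) $x\in X$ iff outdegree 0, indegree 1; (N3) every other non-root vertex has indegree 1 and outdegree $\ge2$, or indegree 2 (hybrid-vertex) and outdegree $\ge1$. In networks where each biconnected component has at most one hybrid-vertex (level-1), $\mathrm{lca}_N(x,y)$ is unique. Labeled network: $t:V\to\{0,1,\odot\}$, $t(v)=\odot$ iff $v\in X$; it explains $G$ if $G$ is isomorphic to the graph on $X$ with $x\ne y$ adjacent iff $t(\mathrm{lca}_N(x,y))=1$. $N$ is elementary if it consists of a single cycle $C$ with $|X|+1$ vertices containing $\rho_N$ and a hybrid-vertex $\eta_N$, plus one edge from each vertex of $C$ other than $\rho_N$ to a leaf, these leaves pairwise distinct and forming $X$. $C$ consists of two internally disjoint directed paths (sides) from $\rho_N$ to $\eta_N$; it is weak if one side consists of $\rho_N,\eta_N$ only, or both sides contain exactly one other vertex; $N$ is strong if $C$ is not weak. $(N,t)$ is quasi-discriminating if $t(u)\ne t(v)$ for every edge $(u,v)$ with $u,v\notin X$ and $v$ not a hybrid-vertex. A caterpillar is a rooted tree whose inner vertices each have two children and induce a path with the root at one end; a cherry is a pair of leaves with a common parent. A cograph is caterpillar-explainable if its unique discriminating cotree (labeled tree explaining it with adjacent inner vertices differently labeled) is a caterpillar.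 $G$ is a $(v,G_1,G_2)$-pseudo-cograph if $G_1,G_2$ are induced subgraphs, $v\in V(G)$, with $V(G)=V(G_1)\cup V(G_2)$, $V(G_1)\cap V(G_2)=\{v\}$, $|V(G_1)|,|V(G_2)|>1$, $G_1,G_2$ cographs, and $G-v$ the join or disjoint union of $G_1-v,G_2-v$. Such $G$ with $|V(G)|\ge4$ is a $(v,G_1,G_2)$-polar-cat if either ($G_1,G_2$ both connected and $G-v$ the disjoint union) or ($G_1,G_2$ both disconnected and $G-v$ the join), and $G_1,G_2$ are caterpillar-explainable with $v$ part of a cherry in both explaining caterpillars. A polar-cat is a $(v,G_1,G_2)$-polar-cat for some $v,G_1,G_2$. *)

theory Defs
  imports Main
begin

type_synonym 'a graph = "'a set \<times> 'a set set"

definition is_graph :: "'a graph \<Rightarrow> bool" where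
  "is_graph G \<longleftrightarrow> finite (fst G) \<and> (\<forall>e\<in>snd G. e \<subseteq> fst G \<and> card e = 2)"

definition induced :: "'a graph \<Rightarrow> 'a set \<Rightarrow> 'a graph" where
  "induced G S = (S, {e\<in>snd G. e \<subseteq> S})"

definition del_vert :: "'a graph \<Rightarrow> 'a \<Rightarrow> 'a graph" where
  "del_vert G v = induced G (fst G - {v})"

definition disj_union :: "'a graph \<Rightarrow> 'a graph \<Rightarrow> 'a graph" where
  "disj_union G H = (fst G \<union> fst H, snd G \<union> snd H)"

definition graph_join :: "'a graph \<Rightarrow> 'a graph \<Rightarrow> 'a graph" where
  "graph_join G H = (fst G \<union> fst H,
     snd G \<union> snd H \<union> {{x, y} | x y. x \<in> fst G \<and> y \<in> fst H})"

definition graph_connected :: "'a graph \<Rightarrow> bool" where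
  "graph_connected G \<longleftrightarrow> fst G \<noteq> {} \<and>
     (\<forall>x\<in>fst G. \<forall>y\<in>fst G. (x, y) \<in> {(a, b). {a, b} \<in> snd G}\<^sup>*)"

definition cograph :: "'a graph \<Rightarrow> bool" where
  "cograph G \<longleftrightarrow> \<not> (\<exists>a\<in>fst G. \<exists>b\<in>fst G. \<exists>c\<in>fst G. \<exists>d\<in>fst G.
      distinct [a, b, c, d] \<and>
      {a, b} \<in> snd G \<and> {b, c} \<in> snd G \<and> {c, d} \<in> snd G \<and>
      {a, c} \<notin> snd G \<and> {b, d} \<notin> snd G \<and> {a, d} \<notin> snd G)"

text \<open>A network is given by its vertex set NV, arc set NE (pairs (u,w) meaning u \<rightarrow> w),
  and leaf set X.\<close>

definition indeg :: "('b \<times> 'b) set \<Rightarrow> 'b \<Rightarrow> nat" where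
  "indeg E v = card {u. (u, v) \<in> E}"

definition outdeg :: "('b \<times> 'b) set \<Rightarrow> 'b \<Rightarrow> nat" where
  "outdeg E v = card {w. (v, w) \<in> E}"

definition network :: "'b set \<Rightarrow> ('b \<times> 'b) set \<Rightarrow> 'b set \<Rightarrow> bool" where
  "network V E X \<longleftrightarrow> finite V \<and> E \<subseteq> V \<times> V \<and> X \<subseteq> V \<and> acyclic E \<and>
     ((\<exists>x. V = {x} \<and> X = {x} \<and> E = {}) \<or>
      ((\<exists>!r. r \<in> V \<and> indeg E r = 0) \<and>
       (\<forall>r\<in>V. indeg E r = 0 \<longrightarrow> outdeg E r \<ge> 2) \<and>
       (\<forall>x\<in>V. x \<in> X \<longleftrightarrow> outdeg E x = 0 \<and> indeg E x = 1) \<and>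
       (\<forall>v\<in>V. indeg E v \<noteq> 0 \<and> v \<notin> X \<longrightarrow>
           (indeg E v = 1 \<and> outdeg E v \<ge> 2) \<or> (indeg E v = 2 \<and> outdeg E v \<ge> 1))))"

definition net_root :: "'b set \<Rightarrow> ('b \<times> 'b) set \<Rightarrow> 'b" where
  "net_root V E = (THE r. r \<in> V \<and> indeg E r = 0)"

definition hybrid :: "('b \<times> 'b) set \<Rightarrow> 'b \<Rightarrow> bool" where
  "hybrid E v \<longleftrightarrow> indeg E v = 2"

text \<open>Lowest common ancestor (unique in level-1 networks, in particular in trees and
  elementary networks).\<close>
definition is_lca :: "'b set \<Rightarrow> ('b \<times> 'b) set \<Rightarrow> 'b \<Rightarrow> 'b \<Rightarrow> 'b \<Rightarrow> bool" where
  "is_lca V E x y v \<longleftrightarrow> v \<in> V \<and> (v, x) \<in> E\<^sup>* \<and> (v, y) \<in> E\<^sup>* \<and>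
     (\<forall>w\<in>V. (w, x) \<in> E\<^sup>* \<and> (w, y) \<in> E\<^sup>* \<and> (v, w) \<in> E\<^sup>* \<longrightarrow> w = v)"

definition lca :: "'b set \<Rightarrow> ('b \<times> 'b) set \<Rightarrow> 'b \<Rightarrow> 'b \<Rightarrow> 'b" where
  "lca V E x y = (THE v. is_lca V E x y v)"

datatype label = L0 | L1 | Odot

definition labeled_network :: "'b set \<Rightarrow> ('b \<times> 'b) set \<Rightarrow> 'b set \<Rightarrow> ('b \<Rightarrow> label) \<Rightarrow> bool" where
  "labeled_network V E X t \<longleftrightarrow> network V E X \<and> (\<forall>v\<in>V. t v = Odot \<longleftrightarrow> v \<in> X)"

definition explains_via :: "'a graph \<Rightarrow> 'b set \<Rightarrow> ('b \<times> 'b) set \<Rightarrow> 'b set \<Rightarrow> ('b \<Rightarrow> label)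
    \<Rightarrow> ('a \<Rightarrow> 'b) \<Rightarrow> bool" where
  "explains_via G V E X t \<phi> \<longleftrightarrow> bij_betw \<phi> (fst G) X \<and>
     (\<forall>x\<in>fst G. \<forall>y\<in>fst G. x \<noteq> y \<longrightarrow> ({x, y} \<in> snd G \<longleftrightarrow> t (lca V E (\<phi> x) (\<phi> y)) = L1))"

definition explains :: "'a graph \<Rightarrow> 'b set \<Rightarrow> ('b \<times> 'b) set \<Rightarrow> 'b set \<Rightarrow> ('b \<Rightarrow> label) \<Rightarrow> bool" where
  "explains G V E X t \<longleftrightarrow> (\<exists>\<phi>. explains_via G V E X t \<phi>)"

text \<open>Elementary networks, described by the two sides P, Q of the cycle C
  (lists of vertices from the root to the hybrid vertex eta).\<close>
definition elementary_sides :: "'b set \<Rightarrow> ('b \<times> 'b) set \<Rightarrow> 'b set \<Rightarrow> 'b list \<Rightarrow> 'b list \<Rightarrow> bool" where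
  "elementary_sides V E X P Q \<longleftrightarrow>
     length P \<ge> 2 \<and> length Q \<ge> 2 \<and> \<not> (length P = 2 \<and> length Q = 2) \<and>
     distinct P \<and> distinct Q \<and>
     hd P = net_root V E \<and> hd Q = hd P \<and> last Q = last P \<and> hybrid E (last P) \<and>
     set P \<inter> set Q = {hd P, last P} \<and>
     (let C = set P \<union> set Q in
        C \<inter> X = {} \<and> V = C \<union> X \<and> card C = card X + 1 \<and>
        (\<exists>lf. bij_betw lf (C - {hd P}) X \<and>
           E = set (zip P (tl P)) \<union> set (zip Q (tl Q)) \<union> {(c, lf c) | c. c \<in> C - {hd P}}))"

definition elementary :: "'b set \<Rightarrow> ('b \<times> 'b) set \<Rightarrow> 'b set \<Rightarrow> bool" where
  "elementary V E X \<longleftrightarrow> (\<exists>P Q. elementary_sides V E X P Q)"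

definition weak_sides :: "'b list \<Rightarrow> 'b list \<Rightarrow> bool" where
  "weak_sides P Q \<longleftrightarrow> length P = 2 \<or> length Q = 2 \<or> (length P = 3 \<and> length Q = 3)"

definition strong :: "'b set \<Rightarrow> ('b \<times> 'b) set \<Rightarrow> 'b set \<Rightarrow> bool" where
  "strong V E X \<longleftrightarrow> elementary V E X \<and>
     (\<forall>P Q. elementary_sides V E X P Q \<longrightarrow> \<not> weak_sides P Q)"

definition quasi_discriminating :: "'b set \<Rightarrow> ('b \<times> 'b) set \<Rightarrow> 'b set \<Rightarrow> ('b \<Rightarrow> label) \<Rightarrow> bool" where
  "quasi_discriminating V E X t \<longleftrightarrow>
     (\<forall>(u, w)\<in>E. u \<notin> X \<and> w \<notin> X \<and> \<not> hybrid E w \<longrightarrow> t u \<noteq> t w)"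

definition is_tree :: "'b set \<Rightarrow> ('b \<times> 'b) set \<Rightarrow> 'b set \<Rightarrow> bool" where
  "is_tree V E X \<longleftrightarrow> network V E X \<and> (\<forall>v\<in>V. indeg E v \<le> 1)"

definition discriminating :: "('b \<times> 'b) set \<Rightarrow> 'b set \<Rightarrow> ('b \<Rightarrow> label) \<Rightarrow> bool" where
  "discriminating E X t \<longleftrightarrow> (\<forall>(u, w)\<in>E. u \<notin> X \<and> w \<notin> X \<longrightarrow> t u \<noteq> t w)"

definition disc_cotree_via :: "'a graph \<Rightarrow> 'b set \<Rightarrow> ('b \<times> 'b) set \<Rightarrow> 'b set \<Rightarrow> ('b \<Rightarrow> label)
    \<Rightarrow> ('a \<Rightarrow> 'b) \<Rightarrow> bool" where
  "disc_cotree_via G V E X t \<phi> \<longleftrightarrow> labeled_network V E X t \<and> is_tree V E X \<and>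
     discriminating E X t \<and> explains_via G V E X t \<phi>"

definition caterpillar :: "'b set \<Rightarrow> ('b \<times> 'b) set \<Rightarrow> 'b set \<Rightarrow> bool" where
  "caterpillar V E X \<longleftrightarrow> is_tree V E X \<and> (\<forall>v\<in>V - X. outdeg E v = 2) \<and>
     (\<exists>L. L \<noteq> [] \<and> distinct L \<and> set L = V - X \<and> hd L = net_root V E \<and>
        {(u, w) \<in> E. u \<in> V - X \<and> w \<in> V - X} = set (zip L (tl L)))"

definition cherry :: "('b \<times> 'b) set \<Rightarrow> 'b set \<Rightarrow> 'b \<Rightarrow> 'b \<Rightarrow> bool" where
  "cherry E X x y \<longleftrightarrow> x \<in> X \<and> y \<in> X \<and> x \<noteq> y \<and> (\<exists>p. (p, x) \<in> E \<and> (p, y) \<in> E)"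

definition caterpillar_explainable :: "'a graph \<Rightarrow> bool" where
  "caterpillar_explainable G \<longleftrightarrow> cograph G \<and>
     (\<exists>(V::nat set) E X t \<phi>. disc_cotree_via G V E X t \<phi> \<and> caterpillar V E X)"

definition cherry_in_caterpillar :: "'a graph \<Rightarrow> 'a \<Rightarrow> bool" where
  "cherry_in_caterpillar G v \<longleftrightarrow>
     (\<exists>(V::nat set) E X t \<phi>. disc_cotree_via G V E X t \<phi> \<and> caterpillar V E X \<and>
        (\<exists>y. cherry E X (\<phi> v) y))"

definition pseudo_cograph :: "'a graph \<Rightarrow> 'a \<Rightarrow> 'a set \<Rightarrow> 'a set \<Rightarrow> bool" where
  "pseudo_cograph G v V1 V2 \<longleftrightarrow>
     V1 \<subseteq> fst G \<and> V2 \<subseteq> fst G \<and> v \<in> fst G \<and>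
     fst G = V1 \<union> V2 \<and> V1 \<inter> V2 = {v} \<and> card V1 > 1 \<and> card V2 > 1 \<and>
     cograph (induced G V1) \<and> cograph (induced G V2) \<and>
     (del_vert G v = graph_join (del_vert (induced G V1) v) (del_vert (induced G V2) v) \<or>
      del_vert G v = disj_union (del_vert (induced G V1) v) (del_vert (induced G V2) v))"

definition polar_cat_at :: "'a graph \<Rightarrow> 'a \<Rightarrow> 'a set \<Rightarrow> 'a set \<Rightarrow> bool" where
  "polar_cat_at G v V1 V2 \<longleftrightarrow> pseudo_cograph G v V1 V2 \<and> card (fst G) \<ge> 4 \<and>
     ((graph_connected (induced G V1) \<and> graph_connected (induced G V2) \<and>
         del_vert G v = disj_union (del_vert (induced G V1) v) (del_vert (induced G V2) v)) \<or>
      (\<not> graph_connected (induced G V1) \<and> \<not> graph_connected (induced G V2) \<and>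
         del_vert G v = graph_join (del_vert (induced G V1) v) (del_vert (induced G V2) v))) \<and>
     caterpillar_explainable (induced G V1) \<and> caterpillar_explainable (induced G V2) \<and>
     cherry_in_caterpillar (induced G V1) v \<and> cherry_in_caterpillar (induced G V2) v"

definition polar_cat :: "'a graph \<Rightarrow> bool" where
  "polar_cat G \<longleftrightarrow> (\<exists>v V1 V2. polar_cat_at G v V1 V2)"

end

theory Submission
  imports Defs
begin

text \<open>Both sides are characterised by the same normal form: the vertices are listed as
  ys @ zs @ [v] so that ys @ [v] and zs @ [v] are the leaf orders along the spines of caterpillars
  explaining the two parts, ending in the common cherry vertex v, all pairs between ys and zs
  have the same adjacency b, and the top spine labels of both orders differ from b.
  For a polar-cat, b says whether G - v is a join and the top labels encode the connectivity of
  the parts. In an elementary network the lca of two leaves hanging off the same side of the cycle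
  is the upper one of their parents and that of two leaves off different sides is the root; so
  the two sides are the two spines, the root carries b, quasi-discrimination is the alternation
  of spine labels, and strength is the size condition of a polar-cat.\<close>

lemma in_set_zip_tl_iff:
  "(a, b) \<in> set (zip xs (tl xs)) \<longleftrightarrow> (\<exists>i. Suc i < length xs \<and> a = xs ! i \<and> b = xs ! Suc i)"
  by (auto simp: in_set_zip nth_tl) (metis less_diff_conv add_Suc_right add_0_right)

definition list_pos :: "'a list \<Rightarrow> 'a \<Rightarrow> nat" where
  "list_pos xs a = (LEAST i. i < length xs \<and> xs ! i = a)"

lemma list_pos_nth: "distinct xs \<Longrightarrow> i < length xs \<Longrightarrow> list_pos xs (xs ! i) = i"
  unfolding list_pos_def
  by (rule Least_equality) (use nth_eq_iff_index_eq in \<open>auto simp: not_less[symmetric]\<close>)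

lemma list_pos_in_set:
  assumes "a \<in> set xs"
  shows "list_pos xs a < length xs \<and> xs ! list_pos xs a = a"
proof -
  obtain i where "i < length xs \<and> xs ! i = a" using assms by (auto simp: in_set_conv_nth)
  then show ?thesis unfolding list_pos_def by (rule LeastI)
qed

lemma acyclicI_rank:
  assumes "\<And>a b. (a, b) \<in> E \<Longrightarrow> f a < (f b :: nat)"
  shows "acyclic E"
proof -
  have "acyclic (E\<inverse>)" by (rule acyclicI_order[where f = f]) (use assms in auto)
  then show ?thesis by simp
qed

lemma lca_eqI:
  assumes "acyclic E" and "w \<in> V" "(w, x) \<in> E\<^sup>*" "(w, y) \<in> E\<^sup>*"
    and "\<And>u. (u, x) \<in> E\<^sup>* \<Longrightarrow> (u, y) \<in> E\<^sup>* \<Longrightarrow> (u, w) \<in> E\<^sup>*"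
  shows "lca V E x y = w"
proof -
  have "is_lca V E x y w"
    using assms acyclic_impl_antisym_rtrancl[OF assms(1)] unfolding is_lca_def antisym_def by blast
  moreover have "u = w" if "is_lca V E x y u" for u
    using that assms unfolding is_lca_def by blast
  ultimately show ?thesis
    unfolding lca_def by (rule the_equality)
qed

lemma lca_commute: "lca V E x y = lca V E y x"
  unfolding lca_def is_lca_def by (simp only: conj_ac)

definition label_of :: "bool \<Rightarrow> label" where
  "label_of x = (if x then L1 else L0)"

lemma label_neq_imp_L1_neq: "a \<noteq> Odot \<Longrightarrow> b \<noteq> Odot \<Longrightarrow> a \<noteq> b \<Longrightarrow> (a = L1) \<noteq> (b = L1)"
  by (cases a; cases b) auto

lemma explains_via_nth:
  assumes ex: "explains_via G V E X t \<phi>" and xs: "distinct xs" "set xs \<subseteq> X"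
  defines "ys \<equiv> map (inv_into (fst G) \<phi>) xs"
  shows "distinct ys" and "set ys \<subseteq> fst G" and "\<And>i. i < length xs \<Longrightarrow> \<phi> (ys ! i) = xs ! i"
    and "\<And>i j. i < length xs \<Longrightarrow> j < length xs \<Longrightarrow> i \<noteq> j \<Longrightarrow>
           {ys ! i, ys ! j} \<in> snd G \<longleftrightarrow> t (lca V E (xs ! i) (xs ! j)) = L1"
proof -
  have bij: "bij_betw \<phi> (fst G) X" using ex unfolding explains_via_def by blast
  have inv: "bij_betw (inv_into (fst G) \<phi>) X (fst G)" using bij by (rule bij_betw_inv_into)
  show dist: "distinct ys"
    unfolding ys_def using xs inv by (auto simp: distinct_map bij_betw_def intro: inj_on_subset)
  show "set ys \<subseteq> fst G" unfolding ys_def using xs inv by (auto simp: bij_betw_def)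
  show phi: "\<phi> (ys ! i) = xs ! i" if "i < length xs" for i
  proof -
    have "xs ! i \<in> \<phi> ` fst G" using that xs bij by (auto simp: bij_betw_def)
    then show ?thesis unfolding ys_def using that by (simp add: f_inv_into_f)
  qed
  fix i j assume ij: "i < length xs" "j < length xs" "i \<noteq> j"
  have "ys ! i \<noteq> ys ! j" using dist ij unfolding distinct_conv_nth by (simp add: ys_def)
  moreover have "ys ! i \<in> fst G" "ys ! j \<in> fst G"
    using \<open>set ys \<subseteq> fst G\<close> ij by (auto simp: ys_def)
  ultimately show "{ys ! i, ys ! j} \<in> snd G \<longleftrightarrow> t (lca V E (xs ! i) (xs ! j)) = L1"
    using ex phi ij unfolding explains_via_def by metis
qed

lemma explains_via_zip:
  assumes ws: "distinct ws" "set ws = fst G" and xs: "distinct xs" "set xs = X"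
    and len: "length ws = length xs"
    and adj: "\<And>i j. i < j \<Longrightarrow> j < length ws \<Longrightarrow>
                {ws ! i, ws ! j} \<in> snd G \<longleftrightarrow> t (lca V E (xs ! i) (xs ! j)) = L1"
  shows "explains_via G V E X t (\<lambda>a. xs ! list_pos ws a)"
proof -
  let ?\<phi> = "\<lambda>a. xs ! list_pos ws a"
  have phi: "?\<phi> (ws ! i) = xs ! i" if "i < length ws" for i
    using list_pos_nth[OF ws(1) that] by simp
  have "bij_betw ((!) xs \<circ> inv_into {..<length ws} ((!) ws)) (fst G) X"
    using bij_betw_nth[OF ws(1) refl refl] bij_betw_nth[OF xs(1) refl refl] ws(2) xs(2) len
    by (metis bij_betw_inv_into bij_betw_trans)
  moreover have "inv_into {..<length ws} ((!) ws) a = list_pos ws a" if "a \<in> fst G" for a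
    using that ws bij_betw_nth[OF ws(1) refl refl]
    by (metis (no_types, lifting) bij_betw_inv_into_left in_set_conv_nth lessThan_iff list_pos_nth)
  ultimately have bij: "bij_betw ?\<phi> (fst G) X"
    using bij_betw_cong[of "fst G" ?\<phi> "(!) xs \<circ> inv_into {..<length ws} ((!) ws)" X] by simp
  have "{x, y} \<in> snd G \<longleftrightarrow> t (lca V E (?\<phi> x) (?\<phi> y)) = L1"
    if xy: "x \<in> fst G" "y \<in> fst G" "x \<noteq> y" for x y
  proof -
    obtain i where i: "i < length ws" "x = ws ! i" using xy(1) ws(2) by (metis in_set_conv_nth)
    obtain j where j: "j < length ws" "y = ws ! j" using xy(2) ws(2) by (metis in_set_conv_nth)
    consider "i < j" | "j < i" using i j \<open>x \<noteq> y\<close> by (metis linorder_neqE_nat)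
    then show ?thesis
    proof cases
      case 1
      then show ?thesis using adj[of i j] i j phi by simp
    next
      case 2
      then show ?thesis using adj[of j i] i j phi by (simp add: insert_commute lca_commute)
    qed
  qed
  with bij show ?thesis unfolding explains_via_def by blast
qed

section \<open>Caterpillar orders\<close>

text \<open>A caterpillar order lists the vertices in the order in which their leaves hang off the
  spine of a caterpillar explaining the graph, from the root downwards: ys ! i hangs below the
  i-th spine vertex, the last two entries form the cherry, and ls ! i says whether the i-th spine
  vertex is labelled 1.\<close>

definition caterpillar_order :: "'a graph \<Rightarrow> 'a list \<Rightarrow> bool list \<Rightarrow> bool" where
  "caterpillar_order G ys ls \<longleftrightarrow> distinct ys \<and> length ys \<ge> 2 \<and> length ls + 1 = length ys \<and>
     (\<forall>i. Suc i < length ls \<longrightarrow> ls ! i \<noteq> ls ! Suc i) \<and>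
     (\<forall>i j. i < j \<and> j < length ys \<longrightarrow> ({ys ! i, ys ! j} \<in> snd G \<longleftrightarrow> ls ! i))"

lemma caterpillar_order_adjacent:
  assumes "caterpillar_order G ys ls" "i < j" "j < length ys"
  shows "{ys ! i, ys ! j} \<in> snd G \<longleftrightarrow> ls ! i"
  using assms unfolding caterpillar_order_def by blast

lemma caterpillar_order_induced:
  assumes "set ys = S"
  shows "caterpillar_order (induced G S) ys ls \<longleftrightarrow> caterpillar_order G ys ls"
proof -
  have edge: "{ys ! i, ys ! j} \<in> snd (induced G S) \<longleftrightarrow> {ys ! i, ys ! j} \<in> snd G"
    if "i < j" "j < length ys" for i j
    using that assms unfolding induced_def by auto
  show ?thesis unfolding caterpillar_order_def by (simp add: edge)
qed

lemma cograph_if_caterpillar_order: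
  assumes ord: "caterpillar_order G ys ls" and set: "set ys = fst G"
  shows "cograph G"
  unfolding cograph_def
proof (intro notI, elim bexE conjE)
  fix a b c d
  assume in4: "a \<in> fst G" "b \<in> fst G" "c \<in> fst G" "d \<in> fst G"
    and dist: "distinct [a, b, c, d]"
    and e: "{a, b} \<in> snd G" "{b, c} \<in> snd G" "{c, d} \<in> snd G"
      "{a, c} \<notin> snd G" "{b, d} \<notin> snd G" "{a, d} \<notin> snd G"
  let ?S = "{a, b, c, d}"
  have mixed: "\<exists>y\<in>?S - {x}. \<exists>z\<in>?S - {x}. {x, y} \<in> snd G \<and> {x, z} \<notin> snd G" if "x \<in> ?S" for x
  proof -
    have "{b, a} \<in> snd G" "{c, b} \<in> snd G" "{d, c} \<in> snd G" "{c, a} \<notin> snd G" "{d, b} \<notin> snd G"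
      using e by (simp_all add: insert_commute)
    with that dist e show ?thesis by blast
  qed
  obtain x where x: "x \<in> ?S" and min: "\<And>y. y \<in> ?S \<Longrightarrow> list_pos ys x \<le> list_pos ys y"
    using ex_has_least_nat[of "\<lambda>y. y \<in> ?S" a "list_pos ys"] by blast
  have pos: "list_pos ys y < length ys \<and> ys ! list_pos ys y = y" if y: "y \<in> ?S" for y
  proof -
    have "y \<in> set ys" using y in4 set by auto
    then show ?thesis by (rule list_pos_in_set)
  qed
  have later: "{x, y} \<in> snd G \<longleftrightarrow> ls ! list_pos ys x" if "y \<in> ?S - {x}" for y
  proof -
    have "list_pos ys x \<noteq> list_pos ys y" using pos[of x] pos[of y] x that by force
    then have "list_pos ys x < list_pos ys y" using min[of y] that by simp
    then show ?thesis using caterpillar_order_adjacent[OF ord] pos[of x] pos[of y] x that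
      by fastforce
  qed
  from mixed[OF x] obtain y z where "y \<in> ?S - {x}" "z \<in> ?S - {x}" "{x, y} \<in> snd G" "{x, z} \<notin> snd G"
    by blast
  then show False using later[of y] later[of z] by simp
qed

lemma graph_connected_iff_caterpillar_order:
  assumes G: "is_graph G" and ord: "caterpillar_order G ys ls" and set: "set ys = fst G"
  shows "graph_connected G \<longleftrightarrow> ls ! 0"
proof -
  let ?R = "{(a, b). {a, b} \<in> snd G}"
  have len: "length ys \<ge> 2" and dist: "distinct ys" using ord unfolding caterpillar_order_def
    by auto
  have first: "{ys ! 0, x} \<in> snd G \<longleftrightarrow> ls ! 0" if x: "x \<in> fst G" "x \<noteq> ys ! 0" for x
  proof -
    obtain k where "k < length ys" "x = ys ! k" using x set by (metis in_set_conv_nth)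
    then show ?thesis using caterpillar_order_adjacent[OF ord, of 0 k] x by (cases k) auto
  qed
  show ?thesis
  proof
    assume "graph_connected G"
    moreover have "ys ! 0 \<in> fst G" "ys ! 1 \<in> fst G"
      using len set nth_mem[of 0 ys] nth_mem[of 1 ys] by fastforce+
    moreover have "ys ! 1 \<noteq> ys ! 0" using len nth_eq_iff_index_eq[OF dist, of 1 0] by fastforce
    ultimately have "(ys ! 0, ys ! 1) \<in> ?R\<^sup>*" unfolding graph_connected_def by blast
    then obtain x where "(ys ! 0, x) \<in> ?R"
      using \<open>ys ! 1 \<noteq> ys ! 0\<close> by (cases rule: converse_rtranclE) auto
    then have edge: "{ys ! 0, x} \<in> snd G" by simp
    then have "x \<in> fst G" "x \<noteq> ys ! 0" using G unfolding is_graph_def by fastforce+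
    then show "ls ! 0" using first edge by blast
  next
    assume "ls ! 0"
    then have down: "(ys ! 0, x) \<in> ?R\<^sup>*" and up: "(x, ys ! 0) \<in> ?R\<^sup>*" if "x \<in> fst G" for x
      using first[of x] that by (cases "x = ys ! 0"; auto simp: insert_commute)+
    moreover have "fst G \<noteq> {}" using set len by auto
    ultimately show "graph_connected G"
      unfolding graph_connected_def by (blast intro: rtrancl_trans)
  qed
qed

section \<open>Caterpillars\<close>

locale caterpillar_spine =
  fixes V :: "'b set" and E :: "('b \<times> 'b) set" and X :: "'b set" and L :: "'b list"
  assumes caterpillar: "caterpillar V E X"
    and spine_ne: "L \<noteq> []" and spine_distinct: "distinct L" and spine_set: "set L = V - X"
    and spine_edges: "{(u, w) \<in> E. u \<in> V - X \<and> w \<in> V - X} = set (zip L (tl L))"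
begin

lemma network: "network V E X"
  using caterpillar unfolding caterpillar_def is_tree_def by blast

lemma finite_V: "finite V" and edges_V: "E \<subseteq> V \<times> V" and acyclic: "acyclic E"
  using network unfolding network_def by auto

lemma leaf_iff: "x \<in> V \<Longrightarrow> x \<in> X \<longleftrightarrow> outdeg E x = 0 \<and> indeg E x = 1"
proof -
  have "V - X \<noteq> {}" using spine_ne spine_set[symmetric] by simp
  then have "\<not> (\<exists>x. V = {x} \<and> X = {x} \<and> E = {})" by auto
  with network show "x \<in> V \<Longrightarrow> x \<in> X \<longleftrightarrow> outdeg E x = 0 \<and> indeg E x = 1"
    unfolding network_def by blast
qed

lemma finite_successors: "finite {w. (u, w) \<in> E}"
  using finite_V edges_V by (auto intro: finite_subset)

lemma leaf_no_successor:
  assumes "(u, w) \<in> E"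
  shows "u \<notin> X"
proof
  assume "u \<in> X"
  then have "card {w. (u, w) \<in> E} = 0" using leaf_iff assms edges_V unfolding outdeg_def by blast
  then show False using finite_successors assms by auto
qed

lemma leaf_parent_unique:
  assumes "x \<in> X" "(u, x) \<in> E" "(u', x) \<in> E"
  shows "u = u'"
proof -
  have "x \<in> V" using assms(2) edges_V by blast
  then have "indeg E x = 1" using assms(1) leaf_iff by blast
  then obtain z where "{w. (w, x) \<in> E} = {z}" unfolding indeg_def
    by (auto simp: card_1_singleton_iff)
  then show ?thesis using assms by (metis (mono_tags) mem_Collect_eq singletonD)
qed

lemma last_spine_index: "length L - 1 < length L"
  using spine_ne by simp

lemma spine_nth_notin_leaves: "i < length L \<Longrightarrow> L ! i \<in> V - X"
  using spine_set nth_mem by blast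

lemma spine_edge: "Suc i < length L \<Longrightarrow> (L ! i, L ! Suc i) \<in> E"
  using spine_edges in_set_zip_tl_iff[of "L ! i" "L ! Suc i" L] by blast

lemma inner_edge:
  assumes "(u, w) \<in> E" "w \<notin> X"
  obtains i where "Suc i < length L" "u = L ! i" "w = L ! Suc i"
proof -
  have "(u, w) \<in> set (zip L (tl L))"
    using assms leaf_no_successor edges_V spine_edges by blast
  then show ?thesis using that in_set_zip_tl_iff[of u w L] by blast
qed

lemma spine_successor:
  assumes "i < length L" "(L ! i, w) \<in> E" "w \<notin> X"
  shows "Suc i < length L \<and> w = L ! Suc i"
proof -
  obtain k where "Suc k < length L" "L ! i = L ! k" "w = L ! Suc k"
    using inner_edge assms(2, 3) by blast
  then show ?thesis using assms(1) spine_distinct by (simp add: nth_eq_iff_index_eq)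
qed

lemma spine_rtrancl: "i \<le> j \<Longrightarrow> j < length L \<Longrightarrow> (L ! i, L ! j) \<in> E\<^sup>*"
proof (induction j)
  case (Suc j)
  then show ?case
    using spine_edge[of j] by (cases "i = Suc j") (auto intro: rtrancl_into_rtrancl)
qed simp

lemma lca_spine_leaves:
  assumes "x \<in> X" "x' \<in> X" "x \<noteq> x'" "(L ! p, x) \<in> E" "(L ! p', x') \<in> E" "p \<le> p'" "p' < length L"
  shows "lca V E x x' = L ! p"
proof (rule lca_eqI[OF acyclic])
  show "L ! p \<in> V" using spine_nth_notin_leaves assms(6, 7) by auto
  show "(L ! p, x) \<in> E\<^sup>*" using assms(4) by blast
  show "(L ! p, x') \<in> E\<^sup>*"
    using spine_rtrancl[OF assms(6, 7)] assms(5) by (rule rtrancl_into_rtrancl)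
  fix u assume u: "(u, x) \<in> E\<^sup>*" "(u, x') \<in> E\<^sup>*"
  have "u \<noteq> x"
  proof
    assume "u = x"
    with u(2) assms(3) obtain w where "(x, w) \<in> E" by (metis converse_rtranclE)
    then show False using leaf_no_successor assms(1) by blast
  qed
  then obtain z where "(u, z) \<in> E\<^sup>*" "(z, x) \<in> E" using u(1) by (blast elim: rtranclE)
  moreover from this have "z = L ! p" using leaf_parent_unique[OF assms(1)] assms(4) by simp
  ultimately show "(u, L ! p) \<in> E\<^sup>*" by simp
qed

lemma spine_children_card: "i < length L \<Longrightarrow> card {w. (L ! i, w) \<in> E} = 2"
  using caterpillar spine_nth_notin_leaves unfolding caterpillar_def outdeg_def by blast

lemma leaf_children_of_inner_spine:
  assumes "Suc i < length L"
  shows "\<exists>!c. c \<in> X \<and> (L ! i, c) \<in> E"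
proof -
  have i: "i < length L" using assms by simp
  have next_spine: "L ! Suc i \<notin> X" using spine_nth_notin_leaves[OF assms] by blast
  have "{c. c \<in> X \<and> (L ! i, c) \<in> E} = {w. (L ! i, w) \<in> E} - {L ! Suc i}"
  proof (intro set_eqI iffI)
    fix w assume "w \<in> {w. (L ! i, w) \<in> E} - {L ! Suc i}"
    then show "w \<in> {c. c \<in> X \<and> (L ! i, c) \<in> E}" using spine_successor[OF i] by auto
  qed (use next_spine in auto)
  moreover have "card ({w. (L ! i, w) \<in> E} - {L ! Suc i}) = 1"
    using spine_children_card[OF i] spine_edge[OF assms] finite_successors by simp
  ultimately obtain c where c: "{c. c \<in> X \<and> (L ! i, c) \<in> E} = {c}"
    by (auto simp: card_1_singleton_iff)
  show ?thesis by (rule ex1I[of _ c]) (use c in \<open>auto simp: set_eq_iff\<close>)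
qed

lemma cherry_below_last_spine:
  assumes "cherry E X x y"
  shows "{w. (L ! (length L - 1), w) \<in> E} = {x, y}"
proof -
  obtain p where p: "(p, x) \<in> E" "(p, y) \<in> E" and xy: "x \<in> X" "y \<in> X" "x \<noteq> y"
    using assms unfolding cherry_def by blast
  have "p \<in> set L" using leaf_no_successor[OF p(1)] p(1) edges_V spine_set by auto
  then obtain q where q: "q < length L" "p = L ! q" by (auto simp: in_set_conv_nth)
  have "q = length L - 1"
    using leaf_children_of_inner_spine[of q] p q xy by (cases "Suc q < length L") auto
  then have "{x, y} \<subseteq> {w. (L ! (length L - 1), w) \<in> E}" using p q by auto
  moreover have "card {w. (L ! (length L - 1), w) \<in> E} = 2"
    using spine_children_card spine_ne by simp
  moreover have "card {x, y} = 2" using xy by simp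
  ultimately show ?thesis using card_subset_eq[OF finite_successors] by metis
qed

definition leaf_child :: "nat \<Rightarrow> 'b" where
  "leaf_child i = (THE c. c \<in> X \<and> (L ! i, c) \<in> E)"

lemma leaf_child:
  assumes "Suc i < length L"
  shows "leaf_child i \<in> X" "(L ! i, leaf_child i) \<in> E"
    and "\<And>c. c \<in> X \<Longrightarrow> (L ! i, c) \<in> E \<Longrightarrow> c = leaf_child i"
  using theI'[OF leaf_children_of_inner_spine[OF assms]] leaf_children_of_inner_spine[OF assms]
  unfolding leaf_child_def by blast+

lemma leaf_parent_on_spine:
  assumes "x \<in> X"
  obtains k where "k < length L" "(L ! k, x) \<in> E"
proof -
  have "indeg E x = 1" using assms leaf_iff network unfolding network_def by blast
  then obtain u where u: "(u, x) \<in> E" unfolding indeg_def by (auto simp: card_1_singleton_iff)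
  then have "u \<in> set L" using leaf_no_successor edges_V spine_set by auto
  with u show ?thesis using that by (auto simp: in_set_conv_nth)
qed

lemma leaf_order:
  assumes "cherry E X x y"
  obtains xs where "distinct xs" "set xs = X" "length xs = Suc (length L)" "last xs = x"
    and "\<And>i. i < length xs \<Longrightarrow> (L ! min i (length L - 1), xs ! i) \<in> E"
proof -
  let ?s = "length L"
  have last: "{w. (L ! (?s - 1), w) \<in> E} = {x, y}" and xy: "x \<in> X" "y \<in> X" "x \<noteq> y"
    using cherry_below_last_spine assms unfolding cherry_def by blast+
  define xs where "xs = map leaf_child [0..<?s - 1] @ [y, x]"
  have len: "length xs = Suc ?s" unfolding xs_def using spine_ne by simp
  have ends: "xs ! (?s - 1) = y" "xs ! ?s = x" unfolding xs_def using spine_ne by (auto simp: nth_append)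
  have parent: "xs ! i \<in> X \<and> (L ! min i (?s - 1), xs ! i) \<in> E" if i: "i < length xs" for i
  proof -
    consider "i < ?s - 1" | "i = ?s - 1" | "i = ?s" using i len by linarith
    then show ?thesis
      by cases (use leaf_child[of i] last xy ends in \<open>auto simp: xs_def nth_append\<close>)
  qed
  have "distinct xs"
    unfolding distinct_conv_nth
  proof (intro allI impI notI)
    fix i j assume ij: "i < length xs" "j < length xs" "i \<noteq> j" and same: "xs ! i = xs ! j"
    then have "L ! min i (?s - 1) = L ! min j (?s - 1)"
      using leaf_parent_unique parent[OF ij(1)] parent[OF ij(2)] by metis
    moreover have "min i (?s - 1) < ?s" "min j (?s - 1) < ?s"
      using min.strict_coboundedI2[OF last_spine_index] by blast+
    ultimately have "min i (?s - 1) = min j (?s - 1)"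
      using nth_eq_iff_index_eq[OF spine_distinct] by blast
    then have "{i, j} = {?s - 1, ?s}" using ij len by auto
    then show False using same xy ends by (auto simp: doubleton_eq_iff)
  qed
  moreover have "X \<subseteq> set xs"
  proof
    fix z assume z: "z \<in> X"
    then obtain k where k: "k < ?s" "(L ! k, z) \<in> E" by (rule leaf_parent_on_spine)
    show "z \<in> set xs"
    proof (cases "Suc k < ?s")
      case True
      then have "k < ?s - 1" by linarith
      then have "z = xs ! k" using leaf_child(3)[OF True z k(2)] by (simp add: xs_def nth_append)
      then show ?thesis using True len by simp
    next
      case False
      then have "k = ?s - 1" using k(1) by linarith
      then have "z \<in> {x, y}" using last k(2) by auto
      then show ?thesis unfolding xs_def by auto
    qed
  qed
  then have "set xs = X" using parent by (auto simp: in_set_conv_nth)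
  moreover have "last xs = x" unfolding xs_def by simp
  ultimately show ?thesis using that len parent by blast
qed

lemma lca_leaf_order:
  assumes xs: "distinct xs" "set xs \<subseteq> X" "length xs = Suc (length L)"
    and parent: "\<And>i. i < length xs \<Longrightarrow> (L ! min i (length L - 1), xs ! i) \<in> E"
    and ij: "i < j" "j < length xs"
  shows "lca V E (xs ! i) (xs ! j) = L ! i"
proof -
  let ?p = "min j (length L - 1)"
  have p: "i \<le> ?p" "?p < length L" and "min i (length L - 1) = i"
    using ij xs(3) last_spine_index by auto
  then have "(L ! i, xs ! i) \<in> E" using parent[of i] ij by simp
  moreover have "xs ! i \<in> X" "xs ! j \<in> X" "xs ! i \<noteq> xs ! j"
    using ij xs(1, 2) by (auto simp: nth_eq_iff_index_eq)
  ultimately show ?thesis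
    using lca_spine_leaves[OF _ _ _ _ parent[of j] p] ij by blast
qed

lemma spine_labels_alternate:
  assumes "discriminating E X t" "\<And>w. w \<in> V \<Longrightarrow> t w = Odot \<longleftrightarrow> w \<in> X" "Suc i < length L"
  shows "(t (L ! i) = L1) \<noteq> (t (L ! Suc i) = L1)"
proof (rule label_neq_imp_L1_neq)
  have spine: "L ! i \<in> V - X" "L ! Suc i \<in> V - X"
    using spine_nth_notin_leaves assms(3) by simp_all
  then show "t (L ! i) \<noteq> t (L ! Suc i)"
    using assms(1) spine_edge[OF assms(3)] unfolding discriminating_def by blast
  show "t (L ! i) \<noteq> Odot" "t (L ! Suc i) \<noteq> Odot" using assms(2) spine by blast+
qed

end

lemma caterpillar_order_if_cherry:
  assumes cotree: "disc_cotree_via G V E X t \<phi>" and cat: "caterpillar V E X"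
    and cherry: "cherry E X (\<phi> v) y" and v: "v \<in> fst G"
  shows "\<exists>ys ls. caterpillar_order G ys ls \<and> set ys = fst G \<and> last ys = v"
proof -
  obtain L where "L \<noteq> []" "distinct L" "set L = V - X"
    "{(u, w) \<in> E. u \<in> V - X \<and> w \<in> V - X} = set (zip L (tl L))"
    using cat unfolding caterpillar_def by blast
  with cat interpret caterpillar_spine V E X L by unfold_locales
  obtain xs where xs: "distinct xs" "set xs = X" "length xs = Suc (length L)" "last xs = \<phi> v"
    and parent: "\<And>i. i < length xs \<Longrightarrow> (L ! min i (length L - 1), xs ! i) \<in> E"
    using leaf_order[OF cherry] by blast
  have ex: "explains_via G V E X t \<phi>" and disc: "discriminating E X t"
    and labels: "\<And>w. w \<in> V \<Longrightarrow> t w = Odot \<longleftrightarrow> w \<in> X"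
    using cotree unfolding disc_cotree_via_def labeled_network_def by auto
  then have bij: "bij_betw \<phi> (fst G) X" unfolding explains_via_def by blast
  define ys where "ys = map (inv_into (fst G) \<phi>) xs"
  define ls where "ls = map (\<lambda>i. t (L ! i) = L1) [0..<length L]"
  have "set ys = fst G"
    using xs(2) bij_betw_inv_into[OF bij] unfolding ys_def by (simp add: bij_betw_def)
  moreover have "last ys = v"
  proof -
    have "xs \<noteq> []" using xs(3) by auto
    then have "last ys = inv_into (fst G) \<phi> (\<phi> v)" using xs(4) unfolding ys_def
      by (simp add: last_map)
    then show ?thesis using v bij by (simp add: bij_betw_def)
  qed
  moreover have "caterpillar_order G ys ls"
    unfolding caterpillar_order_def
  proof (intro conjI allI impI)
    show "distinct ys" "2 \<le> length ys" "length ls + 1 = length ys"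
      using explains_via_nth(1)[OF ex xs(1)] xs(2,3) spine_ne unfolding ys_def ls_def
      by (auto simp: Suc_le_eq)
    show "ls ! i \<noteq> ls ! Suc i" if "Suc i < length ls" for i
      using spine_labels_alternate[OF disc labels] that unfolding ls_def by simp
    show "{ys ! i, ys ! j} \<in> snd G \<longleftrightarrow> ls ! i" if "i < j \<and> j < length ys" for i j
      using explains_via_nth(4)[OF ex xs(1), of i j] lca_leaf_order[OF xs(1) _ xs(3) parent, of i j]
        xs(2,3) that unfolding ys_def ls_def by auto
  qed
  ultimately show ?thesis by blast
qed

locale standard_caterpillar =
  fixes s :: nat
  assumes spine_pos: "1 \<le> s"
begin

definition cV :: "nat set" where "cV = {..<2 * s + 1}"
definition cX :: "nat set" where "cX = {s..<2 * s + 1}"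
definition cE :: "(nat \<times> nat) set" where
  "cE = {(i, Suc i) | i. Suc i < s} \<union> {(min i (s - 1), s + i) | i. i \<le> s}"

lemma cE_iff: "(a, b) \<in> cE \<longleftrightarrow> (b = Suc a \<and> b < s) \<or> (s \<le> b \<and> b \<le> 2 * s \<and> a = min (b - s) (s - 1))"
  unfolding cE_def by force

lemma predecessors:
  "{u. (u, w) \<in> cE} = (if w = 0 \<or> 2 * s < w then {} else if w < s then {w - 1} else {min (w - s) (s - 1)})"
  using spine_pos by (auto simp: cE_iff)

lemma successors:
  "{w. (u, w) \<in> cE} = (if u < s - 1 then {Suc u, s + u} else if u = s - 1 then {2 * s - 1, 2 * s} else {})"
  using spine_pos by (auto simp: cE_iff min_def)

lemma indeg: "w \<in> cV \<Longrightarrow> indeg cE w = (if w = 0 then 0 else 1)"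
  unfolding indeg_def predecessors cV_def by auto

lemma outdeg: "w \<in> cV \<Longrightarrow> outdeg cE w = (if w < s then 2 else 0)"
  unfolding outdeg_def successors cV_def using spine_pos by auto

lemma cX_iff: "w \<in> cV \<Longrightarrow> w \<in> cX \<longleftrightarrow> \<not> w < s"
  unfolding cV_def cX_def by auto

lemma network: "network cV cE cX"
  unfolding network_def
proof (intro conjI disjI2)
  show "finite cV" "cE \<subseteq> cV \<times> cV" "cX \<subseteq> cV"
    unfolding cV_def cX_def cE_def by auto
  show "acyclic cE"
    by (rule acyclicI_rank[where f = id]) (use spine_pos in \<open>auto simp: cE_iff min_def\<close>)
  show "\<exists>!r. r \<in> cV \<and> indeg cE r = 0"
    using indeg by (intro ex1I[of _ 0]) (auto simp: cV_def split: if_splits)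
  show "\<forall>r\<in>cV. indeg cE r = 0 \<longrightarrow> 2 \<le> outdeg cE r"
    using indeg outdeg spine_pos by (auto split: if_splits)
  show "\<forall>x\<in>cV. x \<in> cX \<longleftrightarrow> outdeg cE x = 0 \<and> indeg cE x = 1"
    using indeg outdeg cX_iff spine_pos by (auto split: if_splits)
  show "\<forall>v\<in>cV. indeg cE v \<noteq> 0 \<and> v \<notin> cX \<longrightarrow>
      indeg cE v = 1 \<and> 2 \<le> outdeg cE v \<or> indeg cE v = 2 \<and> 1 \<le> outdeg cE v"
    using indeg outdeg cX_iff by (auto split: if_splits)
qed

lemma spine_edges: "{(u, w) \<in> cE. u \<in> cV - cX \<and> w \<in> cV - cX} = set (zip [0..<s] (tl [0..<s]))"
proof -
  have "(a, b) \<in> set (zip [0..<s] (tl [0..<s])) \<longleftrightarrow> Suc a < s \<and> b = Suc a" for a b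
  proof
    assume "Suc a < s \<and> b = Suc a"
    then show "(a, b) \<in> set (zip [0..<s] (tl [0..<s]))"
      unfolding in_set_zip_tl_iff by (intro exI[of _ a]) auto
  qed (auto simp: in_set_zip_tl_iff simp del: tl_upt)
  then show ?thesis by (auto simp: cE_iff cV_def cX_def)
qed

lemma caterpillar_spine: "caterpillar_spine cV cE cX [0..<s]"
proof
  have root: "net_root cV cE = 0"
    unfolding net_root_def using indeg by (intro the_equality) (auto simp: cV_def split: if_splits)
  show "caterpillar cV cE cX"
    unfolding caterpillar_def is_tree_def
  proof (intro conjI ballI exI[of _ "[0..<s]"])
    show "indeg cE v \<le> 1" if "v \<in> cV" for v using indeg[OF that] by simp
    show "outdeg cE v = 2" if "v \<in> cV - cX" for v using that outdeg cX_iff by auto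
    show "hd [0..<s] = net_root cV cE" using root spine_pos by simp
    show "[0..<s] \<noteq> []" "distinct [0..<s]" "set [0..<s] = cV - cX"
      using spine_pos by (auto simp: cV_def cX_def)
  qed (fact network spine_edges)+
  show "[0..<s] \<noteq> []" "distinct [0..<s]" "set [0..<s] = cV - cX"
    using spine_pos by (auto simp: cV_def cX_def)
qed (fact spine_edges)

lemma lca_leaves:
  assumes "i < j" "j \<le> s"
  shows "lca cV cE (s + i) (s + j) = i"
proof -
  let ?p = "min j (s - 1)"
  have p: "i \<le> ?p" "?p < length [0..<s]" using assms spine_pos by auto
  interpret caterpillar_spine cV cE cX "[0..<s]" by (rule caterpillar_spine)
  have leaves: "s + i \<in> cX" "s + j \<in> cX" "s + i \<noteq> s + j" using assms unfolding cX_def by auto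
  have edges: "([0..<s] ! i, s + i) \<in> cE" "([0..<s] ! ?p, s + j) \<in> cE"
    using assms spine_pos by (auto simp: cE_iff)
  have "lca cV cE (s + i) (s + j) = [0..<s] ! i" by (rule lca_spine_leaves[OF leaves edges p])
  then show ?thesis using assms by simp
qed

end

lemma caterpillar_explainable_if_caterpillar_order:
  assumes ord: "caterpillar_order G ys ls" and set: "set ys = fst G"
  shows "caterpillar_explainable G \<and> cherry_in_caterpillar G (last ys)"
proof -
  define s where "s = length ls"
  have len: "length ys = Suc s" "1 \<le> s" and dist: "distinct ys"
    and alt: "\<And>i. Suc i < s \<Longrightarrow> ls ! i \<noteq> ls ! Suc i"
    using ord unfolding caterpillar_order_def s_def by auto
  interpret standard_caterpillar s using len by unfold_locales
  interpret caterpillar_spine cV cE cX "[0..<s]" by (rule caterpillar_spine)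
  define t where "t w = (if w < s then if ls ! w then L1 else L0 else Odot)" for w
  define \<phi> where "\<phi> a = [s..<2 * s + 1] ! list_pos ys a" for a
  have "explains_via G cV cE cX t \<phi>"
    unfolding \<phi>_def
  proof (rule explains_via_zip[OF dist set])
    show "distinct [s..<2 * s + 1]" "set [s..<2 * s + 1] = cX" "length ys = length [s..<2 * s + 1]"
      using len by (auto simp: cX_def)
    fix i j assume ij: "i < j" "j < length ys"
    then have "[s..<2 * s + 1] ! i = s + i" "[s..<2 * s + 1] ! j = s + j"
      using len by (auto simp del: upt_Suc)
    then show
      "{ys ! i, ys ! j} \<in> snd G \<longleftrightarrow> t (lca cV cE ([s..<2 * s + 1] ! i) ([s..<2 * s + 1] ! j)) = L1"
      using caterpillar_order_adjacent[OF ord ij] lca_leaves[of i j] ij len by (simp add: t_def)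
  qed
  moreover have "labeled_network cV cE cX t"
    unfolding labeled_network_def using network cX_iff by (auto simp: t_def)
  moreover have "discriminating cE cX t"
    unfolding discriminating_def using alt cX_iff edges_V by (auto simp: cE_iff t_def)
  ultimately have cotree: "disc_cotree_via G cV cE cX t \<phi>"
    using caterpillar unfolding disc_cotree_via_def caterpillar_def by blast
  then have "caterpillar_explainable G"
    unfolding caterpillar_explainable_def
    using cograph_if_caterpillar_order[OF ord set] caterpillar by blast
  moreover have "\<phi> (last ys) = 2 * s"
  proof -
    have "last ys = ys ! s" using len by (cases ys rule: rev_cases) auto
    then show ?thesis using list_pos_nth[OF dist, of s] len by (simp add: \<phi>_def nth_append)
  qed
  moreover have "cherry cE cX (2 * s) (2 * s - 1)"
    unfolding cherry_def using len by (auto simp: cX_def cE_iff intro!: exI[of _ "s - 1"])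
  ultimately show ?thesis
    unfolding cherry_in_caterpillar_def using cotree caterpillar by metis
qed

section \<open>Elementary networks\<close>

locale elementary_cycle =
  fixes P Q :: "'b list" and X :: "'b set" and lf :: "'b \<Rightarrow> 'b" and V :: "'b set"
    and E :: "('b \<times> 'b) set"
  assumes P_length: "length P \<ge> 2" and Q_length: "length Q \<ge> 2"
    and not_both_arcs: "\<not> (length P = 2 \<and> length Q = 2)"
    and P_distinct: "distinct P" and Q_distinct: "distinct Q"
    and hd_Q: "hd Q = hd P" and last_Q: "last Q = last P"
    and sides_inter: "set P \<inter> set Q = {hd P, last P}"
    and cycle_leaves_disjoint: "(set P \<union> set Q) \<inter> X = {}"
    and V_eq: "V = set P \<union> set Q \<union> X"
    and lf_bij: "bij_betw lf (set P \<union> set Q - {hd P}) X"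
    and E_eq:
      "E = set (zip P (tl P)) \<union> set (zip Q (tl Q)) \<union> {(c, lf c) | c. c \<in> set P \<union> set Q - {hd P}}"

lemma elementary_cycle_if_sides:
  assumes "elementary_sides V E X P Q"
  obtains lf where "elementary_cycle P Q X lf V E"
  using assms unfolding elementary_sides_def elementary_cycle_def Let_def by blast

context elementary_cycle
begin

abbreviation "r \<equiv> hd P"
abbreviation "h \<equiv> last P"
abbreviation "C \<equiv> set P \<union> set Q"

lemma swap_sides: "elementary_cycle Q P X lf V E"
proof -
  have u: "set Q \<union> set P = C" by (rule Un_commute)
  have i: "set Q \<inter> set P = {hd Q, last Q}" using sides_inter hd_Q last_Q by (simp add: Int_commute)
  have e: "E = set (zip Q (tl Q)) \<union> set (zip P (tl P)) \<union> {(c, lf c) | c. c \<in> set Q \<union> set P - {hd Q}}"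
    unfolding E_eq u hd_Q by blast
  show ?thesis unfolding elementary_cycle_def u i hd_Q last_Q
    using P_length Q_length not_both_arcs P_distinct Q_distinct cycle_leaves_disjoint V_eq lf_bij e
      unfolding u hd_Q by auto
qed

lemma P_ne: "P \<noteq> []" using P_length by auto
lemma Q_ne: "Q \<noteq> []" using Q_length by auto
lemma P_nth_0: "P ! 0 = r" using P_ne by (simp add: hd_conv_nth)
lemma Q_nth_0: "Q ! 0 = r" using elementary_cycle.P_nth_0[OF swap_sides] hd_Q by simp
lemma P_nth_last: "P ! (length P - 1) = h" using P_ne by (simp add: last_conv_nth)
lemma Q_nth_last: "Q ! (length Q - 1) = h" using elementary_cycle.P_nth_last[OF swap_sides] last_Q
  by simp

lemma P_nth_eq_iff: "i < length P \<Longrightarrow> j < length P \<Longrightarrow> P ! i = P ! j \<longleftrightarrow> i = j"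
  using P_distinct nth_eq_iff_index_eq by blast
lemma Q_nth_eq_iff: "i < length Q \<Longrightarrow> j < length Q \<Longrightarrow> Q ! i = Q ! j \<longleftrightarrow> i = j"
  by (rule elementary_cycle.P_nth_eq_iff[OF swap_sides])

lemma root_neq_hybrid: "r \<noteq> h"
proof
  assume "r = h"
  then have "P ! 0 = P ! (length P - 1)" using P_nth_0 P_nth_last by simp
  moreover have "(0::nat) < length P" "length P - 1 < length P" using P_length by auto
  ultimately have "0 = length P - 1" using P_nth_eq_iff by blast
  then show False using P_length by auto
qed

lemma P_nth_in_Q: "i < length P \<Longrightarrow> P ! i \<in> set Q \<Longrightarrow> i = 0 \<or> i = length P - 1"
proof -
  assume a: "i < length P" "P ! i \<in> set Q"
  then have "P ! i \<in> set P \<inter> set Q" by auto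
  then have "P ! i \<in> {r, h}" using sides_inter by blast
  moreover have "P ! i = P ! 0 \<Longrightarrow> i = 0" using P_nth_eq_iff[of i 0] P_ne a P_ne by auto
  moreover have "P ! i = P ! (length P - 1) \<Longrightarrow> i = length P - 1"
    using P_nth_eq_iff[of i "length P - 1"] P_ne a by auto
  ultimately show ?thesis using P_nth_0 P_nth_last by auto
qed

lemma Q_nth_in_P: "i < length Q \<Longrightarrow> Q ! i \<in> set P \<Longrightarrow> i = 0 \<or> i = length Q - 1"
  by (rule elementary_cycle.P_nth_in_Q[OF swap_sides])

lemma edge_iff: "(a, b) \<in> E \<longleftrightarrow> (\<exists>i. Suc i < length P \<and> a = P ! i \<and> b = P ! Suc i) \<or>
   (\<exists>i. Suc i < length Q \<and> a = Q ! i \<and> b = Q ! Suc i) \<or> (a \<in> C - {r} \<and> b = lf a)"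
  by (auto simp: E_eq in_set_zip_tl_iff)

lemma P_edge: assumes "Suc j < length P" shows "(P ! j, P ! Suc j) \<in> E"
proof -
  have "(P ! j, P ! Suc j) \<in> set (zip P (tl P))" unfolding in_set_zip_tl_iff using assms by blast
  then show ?thesis unfolding E_eq by (rule UnI1[OF UnI1])
qed
lemma Q_edge: "Suc j < length Q \<Longrightarrow> (Q ! j, Q ! Suc j) \<in> E"
  by (rule elementary_cycle.P_edge[OF swap_sides])
lemma leaf_edge: "c \<in> C - {r} \<Longrightarrow> (c, lf c) \<in> E" unfolding E_eq by (rule UnI2) simp

lemma lf_in_X: "c \<in> C - {r} \<Longrightarrow> lf c \<in> X" using lf_bij by (auto simp: bij_betw_def)
lemma lf_eq_iff: "c \<in> C - {r} \<Longrightarrow> d \<in> C - {r} \<Longrightarrow> lf c = lf d \<longleftrightarrow> c = d"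
  using lf_bij by (auto simp: bij_betw_def inj_on_def)
lemma X_lf_image: "x \<in> X \<Longrightarrow> \<exists>c \<in> C - {r}. x = lf c" using lf_bij by (auto simp: bij_betw_def)
lemma cycle_notin_X: "c \<in> C \<Longrightarrow> c \<notin> X" using cycle_leaves_disjoint by auto



lemma P_nth_neq_root: "0 < i \<Longrightarrow> i < length P \<Longrightarrow> P ! i \<noteq> r"
  using P_nth_eq_iff[of i 0] P_ne P_nth_0 by auto
lemma P_nth_neq_hybrid: "i < length P - 1 \<Longrightarrow> P ! i \<noteq> h"
  using P_nth_eq_iff[of i "length P - 1"] P_ne P_nth_last by auto
lemma P_inner_notin_Q: assumes "0 < i" "i < length P - 1" shows "P ! i \<notin> set Q"
proof
  assume a: "P ! i \<in> set Q"
  have "i < length P" using assms by linarith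
  from P_nth_in_Q[OF this a] assms show False by linarith
qed
lemma Q_nth_neq_root: "0 < i \<Longrightarrow> i < length Q \<Longrightarrow> Q ! i \<noteq> r"
  using elementary_cycle.P_nth_neq_root[OF swap_sides] hd_Q by simp
lemma Q_nth_neq_hybrid: "i < length Q - 1 \<Longrightarrow> Q ! i \<noteq> h"
  using elementary_cycle.P_nth_neq_hybrid[OF swap_sides] last_Q by simp
lemma root_in_cycle: "r \<in> C" using P_ne by auto
lemma hybrid_in_cycle: "h \<in> C" using P_ne by auto

lemma predecessors_root: "{u. (u, r) \<in> E} = {}"
proof -
  have False if "(u, r) \<in> E" for u
  proof -
    from that[unfolded edge_iff] show False
    proof (elim disjE exE conjE)
      fix i assume "Suc i < length P" "r = P ! Suc i" then show False
        using P_nth_neq_root[of "Suc i"] by auto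
    next
      fix i assume "Suc i < length Q" "r = Q ! Suc i" then show False
        using Q_nth_neq_root[of "Suc i"] by auto
    next
      assume "u \<in> C - {r}" "r = lf u" then show False using lf_in_X cycle_notin_X root_in_cycle
        by metis
    qed
  qed
  then show ?thesis by auto
qed

lemma predecessors_P_inner: assumes "0 < i" "i < length P - 1"
  shows "{u. (u, P ! i) \<in> E} = {P ! (i - 1)}"
proof -
  have iP: "i < length P" using assms by linarith
  have "u = P ! (i - 1)" if "(u, P ! i) \<in> E" for u
  proof -
    from that[unfolded edge_iff] show ?thesis
    proof (elim disjE exE conjE)
      fix j assume "Suc j < length P" "u = P ! j" "P ! i = P ! Suc j" then show ?thesis
        using P_nth_eq_iff[of i "Suc j"] P_ne assms by auto
    next
      fix j assume "Suc j < length Q" "P ! i = Q ! Suc j" then show ?thesis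
        using P_inner_notin_Q[OF assms] by (metis nth_mem)
    next
      assume "u \<in> C - {r}" "P ! i = lf u" then show ?thesis
        using lf_in_X[of u] cycle_notin_X[of "P ! i"] nth_mem[OF iP] by auto
    qed
  qed
  moreover have "(P ! (i - 1), P ! i) \<in> E"
  proof -
    have "Suc (i - 1) = i" using assms by simp
    then show ?thesis using P_edge[of "i-1"] iP by simp
  qed
  ultimately show ?thesis by blast
qed

lemma predecessors_hybrid: "{u. (u, h) \<in> E} = {P ! (length P - 2), Q ! (length Q - 2)}"
proof -
  have "u = P ! (length P - 2) \<or> u = Q ! (length Q - 2)" if "(u, h) \<in> E" for u
  proof -
    from that[unfolded edge_iff] show ?thesis
    proof (elim disjE exE conjE)
      fix j assume a: "Suc j < length P" "u = P ! j" "h = P ! Suc j"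
      then have "Suc j = length P - 1" using P_nth_eq_iff[of "length P - 1" "Suc j"] P_ne P_nth_last
        by auto
      then have "j = length P - 2" by arith
      then show ?thesis using a by simp
    next
      fix j assume a: "Suc j < length Q" "u = Q ! j" "h = Q ! Suc j"
      then have "Suc j = length Q - 1" using Q_nth_eq_iff[of "length Q - 1" "Suc j"] Q_ne Q_nth_last
        by auto
      then have "j = length Q - 2" by arith
      then show ?thesis using a by simp
    next
      assume "u \<in> C - {r}" "h = lf u" then show ?thesis using lf_in_X cycle_notin_X hybrid_in_cycle
        by metis
    qed
  qed
  moreover have "(P ! (length P - 2), h) \<in> E"
  proof -
    have "Suc (length P - 2) = length P - 1" "length P - 1 < length P" using P_length by auto
    then show ?thesis using P_edge[of "length P - 2"] P_nth_last by simp
  qed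
  moreover have "(Q ! (length Q - 2), h) \<in> E"
  proof -
    have "Suc (length Q - 2) = length Q - 1" "length Q - 1 < length Q" using Q_length by auto
    then show ?thesis using Q_edge[of "length Q - 2"] Q_nth_last by simp
  qed
  ultimately show ?thesis by blast
qed

lemma predecessors_leaf: assumes "c \<in> C - {r}" shows "{u. (u, lf c) \<in> E} = {c}"
proof -
  have "u = c" if "(u, lf c) \<in> E" for u
  proof -
    from that[unfolded edge_iff] show ?thesis
    proof (elim disjE exE conjE)
      fix j assume "Suc j < length P" "lf c = P ! Suc j" then show ?thesis
        using lf_in_X[OF assms] cycle_notin_X[of "P ! Suc j"] by auto
    next
      fix j assume "Suc j < length Q" "lf c = Q ! Suc j" then show ?thesis
        using lf_in_X[OF assms] cycle_notin_X[of "Q ! Suc j"] by auto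
    next
      assume "u \<in> C - {r}" "lf c = lf u" then show ?thesis using lf_eq_iff assms by metis
    qed
  qed
  moreover have "(c, lf c) \<in> E" unfolding edge_iff using assms by auto
  ultimately show ?thesis by blast
qed

lemma successors_root: "{w. (r, w) \<in> E} = {P ! 1, Q ! 1}"
proof -
  have "w = P ! 1 \<or> w = Q ! 1" if "(r, w) \<in> E" for w
  proof -
    from that[unfolded edge_iff] show ?thesis
    proof (elim disjE exE conjE)
      fix j assume "Suc j < length P" "r = P ! j" "w = P ! Suc j" then show ?thesis
        using P_nth_eq_iff[of 0 j] P_ne P_nth_0 by auto
    next
      fix j assume "Suc j < length Q" "r = Q ! j" "w = Q ! Suc j" then show ?thesis
        using Q_nth_eq_iff[of 0 j] Q_ne Q_nth_0 by auto
    qed auto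
  qed
  moreover have "(r, P ! 1) \<in> E"
  proof -
    have "Suc 0 < length P" using P_length by auto
    then show ?thesis using P_edge[of 0] P_nth_0 by simp
  qed
  moreover have "(r, Q ! 1) \<in> E"
  proof -
    have "Suc 0 < length Q" using Q_length by auto
    then show ?thesis using Q_edge[of 0] Q_nth_0 by simp
  qed
  ultimately show ?thesis by blast
qed

lemma successors_P_inner: assumes "0 < i" "i < length P - 1"
  shows "{w. (P ! i, w) \<in> E} = {P ! Suc i, lf (P ! i)}"
proof -
  have iP: "i < length P" using assms by linarith
  have "w = P ! Suc i \<or> w = lf (P ! i)" if "(P ! i, w) \<in> E" for w
  proof -
    from that[unfolded edge_iff] show ?thesis
    proof (elim disjE exE conjE)
      fix j assume "Suc j < length P" "P ! i = P ! j" "w = P ! Suc j" then show ?thesis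
        using P_nth_eq_iff[of i j] P_ne assms by auto
    next
      fix j assume "Suc j < length Q" "P ! i = Q ! j" then show ?thesis
        using P_inner_notin_Q[OF assms] by (metis Suc_lessD nth_mem)
    qed auto
  qed
  moreover have "(P ! i, P ! Suc i) \<in> E"
  proof -
    have "Suc i < length P" using assms by linarith
    then show ?thesis using P_edge by simp
  qed
  moreover have "(P ! i, lf (P ! i)) \<in> E" unfolding edge_iff
    using assms P_nth_neq_root[of i] nth_mem[OF iP] by auto
  ultimately show ?thesis by blast
qed

lemma successors_hybrid: "{w. (h, w) \<in> E} = {lf h}"
proof -
  have "w = lf h" if "(h, w) \<in> E" for w
  proof -
    from that[unfolded edge_iff] show ?thesis
    proof (elim disjE exE conjE)
      fix j assume "Suc j < length P" "h = P ! j" then show ?thesis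
        using P_nth_eq_iff[of "length P - 1" j] P_ne P_nth_last by auto
    next
      fix j assume "Suc j < length Q" "h = Q ! j" then show ?thesis
        using Q_nth_eq_iff[of "length Q - 1" j] Q_ne Q_nth_last by auto
    qed auto
  qed
  moreover have "(h, lf h) \<in> E" unfolding edge_iff using root_neq_hybrid hybrid_in_cycle by auto
  ultimately show ?thesis by blast
qed

lemma successors_leaf: assumes "x \<in> X" shows "{w. (x, w) \<in> E} = {}"
proof -
  have False if "(x, w) \<in> E" for w
    using that[unfolded edge_iff] assms cycle_notin_X by (auto dest: nth_mem)
  then show ?thesis by auto
qed


lemma vertex_cases: assumes "a \<in> V"
  shows "a = r \<or> a = h \<or> (\<exists>i. 0<i \<and> i<length P - 1 \<and> a = P ! i) \<or> (\<exists>i. 0<i \<and> i<length Q - 1 \<and> a = Q ! i) \<or> a \<in> X"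
proof -
  have "a \<in> set P \<or> a \<in> set Q \<or> a \<in> X" using assms V_eq by auto
  then show ?thesis
  proof (elim disjE)
    assume "a \<in> set P"
    then obtain i where i: "i < length P" "a = P ! i" by (auto simp: in_set_conv_nth)
    consider "i = 0" | "i = length P - 1" | "0 < i \<and> i < length P - 1" using i(1) by linarith
    then show ?thesis using P_nth_0 P_nth_last i(2) by cases blast+
  next
    assume "a \<in> set Q"
    then obtain i where i: "i < length Q" "a = Q ! i" by (auto simp: in_set_conv_nth)
    consider "i = 0" | "i = length Q - 1" | "0 < i \<and> i < length Q - 1" using i(1) by linarith
    then show ?thesis using Q_nth_0 Q_nth_last i(2) by cases blast+
  qed simp
qed

lemma root_successors_distinct: "P ! 1 \<noteq> Q ! 1"
proof
  assume e: "P ! 1 = Q ! 1"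
  have "1 < length P" "1 < length Q" using P_length Q_length by auto
  then have "P ! 1 \<in> set Q" using e by simp
  then have "1 = length P - 1" using P_nth_in_Q[of 1] \<open>1 < length P\<close> by auto
  then have "Q ! 1 = h" using e P_nth_last by simp
  then have "Q ! 1 = Q ! (length Q - 1)" using Q_nth_last by simp
  then have "1 = length Q - 1" using Q_nth_eq_iff[of 1 "length Q - 1"] Q_ne \<open>1 < length Q\<close> by auto
  then show False using not_both_arcs \<open>1 = length P - 1\<close> by auto
qed

lemma hybrid_predecessors_distinct: "P ! (length P - 2) \<noteq> Q ! (length Q - 2)"
proof
  assume e: "P ! (length P - 2) = Q ! (length Q - 2)"
  have l: "length P - 2 < length P" "length Q - 2 < length Q" using P_length Q_length by auto
  then have "P ! (length P - 2) \<in> set Q" using e by simp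
  then have "length P - 2 = 0" using P_nth_in_Q[OF l(1)] P_length by auto
  then have "Q ! (length Q - 2) = Q ! 0" using e P_nth_0 Q_nth_0 by simp
  then have "length Q - 2 = 0" using Q_nth_eq_iff[OF l(2)] Q_ne by auto
  then show False using not_both_arcs \<open>length P - 2 = 0\<close> P_length Q_length by auto
qed

lemma P_inner_successors_distinct: "0 < i \<Longrightarrow> i < length P - 1 \<Longrightarrow> P ! Suc i \<noteq> lf (P ! i)"
  using cycle_notin_X[of "P ! Suc i"] lf_in_X[of "P ! i"] P_nth_neq_root[of i] by auto

lemma degrees_root: "indeg E r = 0" "outdeg E r = 2"
  unfolding indeg_def outdeg_def predecessors_root successors_root using root_successors_distinct
    by auto
lemma degrees_hybrid: "indeg E h = 2" "outdeg E h = 1"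
  unfolding indeg_def outdeg_def predecessors_hybrid successors_hybrid
    using hybrid_predecessors_distinct by auto
lemma degrees_P_inner: "0 < i \<Longrightarrow> i < length P - 1 \<Longrightarrow> indeg E (P ! i) = 1 \<and> outdeg E (P ! i) = 2"
  unfolding indeg_def outdeg_def
    using predecessors_P_inner successors_P_inner P_inner_successors_distinct by auto
lemma degrees_Q_inner: "0 < i \<Longrightarrow> i < length Q - 1 \<Longrightarrow> indeg E (Q ! i) = 1 \<and> outdeg E (Q ! i) = 2"
  using elementary_cycle.degrees_P_inner[OF swap_sides] .
lemma degrees_leaf: "x \<in> X \<Longrightarrow> indeg E x = 1 \<and> outdeg E x = 0"
  unfolding indeg_def outdeg_def using predecessors_leaf successors_leaf X_lf_image by fastforce

text \<open>The hybrid vertex is ranked above all other cycle vertices: its position on Q may exceed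
  its position on P.\<close>

definition rank :: "'b \<Rightarrow> nat" where
  "rank a = (if a \<in> X then 3 * (length P + length Q) else if a = h then 2 * (length P + length Q)
     else if a \<in> set P then list_pos P a else list_pos Q a)"

lemma rank_cycle: assumes "c \<in> C" shows "rank c \<le> 2 * (length P + length Q)"
proof -
  have "list_pos P c < length P" if "c \<in> set P" using list_pos_in_set[OF that] by blast
  moreover have "list_pos Q c < length Q" if "c \<in> set Q" using list_pos_in_set[OF that] by blast
  ultimately show ?thesis using assms cycle_notin_X[OF assms] unfolding rank_def by auto
qed

lemma rank_P: "i < length P - 1 \<Longrightarrow> rank (P ! i) = i"
  using cycle_notin_X[of "P ! i"] P_nth_neq_hybrid[of i] list_pos_nth[OF P_distinct, of i]
  unfolding rank_def by auto

lemma rank_Q: "i < length Q - 1 \<Longrightarrow> rank (Q ! i) = i"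
proof (cases "i = 0")
  case True
  then show ?thesis using rank_P[of 0] P_length P_nth_0 Q_nth_0 by simp
next
  case False
  assume "i < length Q - 1"
  then have "Q ! i \<notin> set P" using Q_nth_in_P[of i] False by fastforce
  then show ?thesis
    using cycle_notin_X[of "Q ! i"] Q_nth_neq_hybrid[of i] \<open>i < length Q - 1\<close>
      list_pos_nth[OF Q_distinct, of i]
    unfolding rank_def by auto
qed

lemma rank_hybrid: "rank h = 2 * (length P + length Q)"
  using cycle_notin_X hybrid_in_cycle unfolding rank_def by auto

lemma acyclic_E: "acyclic E"
proof (rule acyclicI_rank[where f = rank])
  fix a b assume "(a, b) \<in> E"
  then show "rank a < rank b" unfolding edge_iff
  proof (elim disjE exE conjE)
    fix i assume i: "Suc i < length P" "a = P ! i" "b = P ! Suc i"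
    then consider "Suc i < length P - 1" | "Suc i = length P - 1" by linarith
    then show ?thesis
      by cases (use i rank_P[of i] rank_P[of "Suc i"] rank_hybrid P_nth_last in auto)
  next
    fix i assume i: "Suc i < length Q" "a = Q ! i" "b = Q ! Suc i"
    then consider "Suc i < length Q - 1" | "Suc i = length Q - 1" by linarith
    then show ?thesis
      by cases (use i rank_Q[of i] rank_Q[of "Suc i"] rank_hybrid Q_nth_last in auto)
  next
    assume "a \<in> C - {r}" "b = lf a"
    then show ?thesis using rank_cycle[of a] lf_in_X[of a] P_length unfolding rank_def[of b] by auto
  qed
qed

lemma finite_V: "finite V"
proof -
  have "finite (C - {r})" by simp
  then have "finite X" using lf_bij bij_betw_finite by blast
  then show ?thesis using V_eq by simp
qed

lemma edges_V: "E \<subseteq> V \<times> V"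
  using lf_in_X unfolding V_eq by (auto simp: edge_iff)

lemma indeg_nonzero: "a \<in> V \<Longrightarrow> a \<noteq> r \<Longrightarrow> indeg E a \<noteq> 0"
  using vertex_cases[of a] degrees_hybrid degrees_P_inner degrees_Q_inner degrees_leaf by auto

lemma hybrid_iff: "a \<in> V \<Longrightarrow> hybrid E a \<longleftrightarrow> a = h"
  unfolding hybrid_def
    using vertex_cases[of a] degrees_hybrid degrees_P_inner degrees_Q_inner degrees_leaf
      degrees_root by auto

lemma network: "network V E X"
  unfolding network_def
proof (intro conjI disjI2)
  show "finite V" by (rule finite_V)
  show "E \<subseteq> V \<times> V" by (rule edges_V)
  show "X \<subseteq> V" using V_eq by auto
  show "acyclic E" by (rule acyclic_E)
  have rV: "r \<in> V" using V_eq root_in_cycle by auto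
  show "\<exists>!x. x \<in> V \<and> indeg E x = 0"
    using rV degrees_root indeg_nonzero by blast
  show "\<forall>x\<in>V. indeg E x = 0 \<longrightarrow> 2 \<le> outdeg E x"
    using degrees_root indeg_nonzero by (metis order_refl)
  show "\<forall>x\<in>V. (x \<in> X) = (outdeg E x = 0 \<and> indeg E x = 1)"
    using vertex_cases degrees_leaf degrees_root degrees_hybrid degrees_P_inner degrees_Q_inner
      by fastforce
  show "\<forall>v\<in>V. indeg E v \<noteq> 0 \<and> v \<notin> X \<longrightarrow> indeg E v = 1 \<and> 2 \<le> outdeg E v \<or> indeg E v = 2 \<and> 1 \<le> outdeg E v"
    using vertex_cases degrees_root degrees_hybrid degrees_P_inner degrees_Q_inner by fastforce
qed

lemma net_root_eq: "net_root V E = r"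
proof -
  have rV: "r \<in> V" using V_eq root_in_cycle by auto
  show ?thesis unfolding net_root_def
    by (rule the_equality) (use rV degrees_root indeg_nonzero in blast)+
qed


definition on_side where "on_side w a \<longleftrightarrow> (\<exists>i j. i \<le> j \<and> j < length P \<and> w = P ! i \<and> a = P ! j) \<or>
   (\<exists>i j. i \<le> j \<and> j < length Q \<and> w = Q ! i \<and> a = Q ! j)"

lemma on_side_swap: "elementary_cycle.on_side Q P = on_side"
  by (auto simp: fun_eq_iff elementary_cycle.on_side_def[OF swap_sides] on_side_def)

lemma P_rtrancl: "i \<le> j \<Longrightarrow> j < length P \<Longrightarrow> (P ! i, P ! j) \<in> E\<^sup>*"
proof (induction j)
  case 0 then show ?case by simp
next
  case (Suc j)
  show ?case
  proof (cases "i = Suc j")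
    case True then show ?thesis by simp
  next
    case False
    then have "(P ! i, P ! j) \<in> E\<^sup>*" using Suc by auto
    moreover have "(P ! j, P ! Suc j) \<in> E" using P_edge Suc by auto
    ultimately show ?thesis by simp
  qed
qed

lemma Q_rtrancl: "i \<le> j \<Longrightarrow> j < length Q \<Longrightarrow> (Q ! i, Q ! j) \<in> E\<^sup>*"
  using elementary_cycle.P_rtrancl[OF swap_sides] .

lemma on_side_rtrancl: "on_side w a \<Longrightarrow> (w, a) \<in> E\<^sup>*"
  unfolding on_side_def using P_rtrancl Q_rtrancl by blast

lemma on_side_cycle: "on_side w a \<Longrightarrow> w \<in> C \<and> a \<in> C"
  unfolding on_side_def by auto

lemma on_side_refl: "c \<in> C \<Longrightarrow> on_side c c"
  unfolding on_side_def by (auto simp: in_set_conv_nth)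

lemma on_side_P_step: assumes "on_side w (P ! i)" "Suc i < length P" shows "on_side w (P ! Suc i)"
  using assms(1)[unfolded on_side_def]
proof (elim disjE exE conjE)
  fix i' j' assume a: "i' \<le> j'" "j' < length P" "w = P ! i'" "P ! i = P ! j'"
  then have "j' = i" using P_nth_eq_iff[of i j'] P_ne assms(2) by auto
  then have hh: "i' \<le> Suc i" "Suc i < length P" "w = P ! i'" using a assms(2) by auto
  show ?thesis unfolding on_side_def
    apply (rule disjI1, rule exI[of _ i'], rule exI[of _ "Suc i"]) using hh by simp
next
  fix i' j' assume a: "i' \<le> j'" "j' < length Q" "w = Q ! i'" "P ! i = Q ! j'"
  then have "P ! i \<in> set Q" by auto
  then have "i = 0" using P_nth_in_Q[of i] assms(2) by auto
  then have "Q ! j' = Q ! 0" using a P_nth_0 Q_nth_0 by simp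
  then have "j' = 0" using Q_nth_eq_iff[of j' 0] Q_ne a Q_ne by auto
  then have "w = P ! 0" using a P_nth_0 Q_nth_0 by simp
  show ?thesis unfolding on_side_def
    apply (rule disjI1, rule exI[of _ 0], rule exI[of _ "Suc i"]) using \<open>w = P ! 0\<close> assms(2) by simp
qed

lemma on_side_Q_step: "on_side w (Q ! i) \<Longrightarrow> Suc i < length Q \<Longrightarrow> on_side w (Q ! Suc i)"
  using elementary_cycle.on_side_P_step[OF swap_sides] unfolding on_side_swap .

lemma ancestor_iff: "(w, a) \<in> E\<^sup>* \<longleftrightarrow> w = a \<or> on_side w a \<or> (\<exists>c\<in>C - {r}. a = lf c \<and> on_side w c)"
proof
  assume "(w, a) \<in> E\<^sup>*"
  then show "w = a \<or> on_side w a \<or> (\<exists>c\<in>C - {r}. a = lf c \<and> on_side w c)"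
  proof (induction rule: rtrancl_induct)
    case base then show ?case by simp
  next
    case (step y z)
    have yC: "on_side w y" if "y \<in> C"
      using step.IH that on_side_cycle on_side_refl lf_in_X cycle_notin_X by metis
    from step.hyps(2)[unfolded edge_iff] show ?case
    proof (elim disjE exE conjE)
      fix i assume "Suc i < length P" "y = P ! i" "z = P ! Suc i"
      then show ?case using yC on_side_P_step by auto
    next
      fix i assume "Suc i < length Q" "y = Q ! i" "z = Q ! Suc i"
      then show ?case using yC on_side_Q_step by auto
    next
      assume "y \<in> C - {r}" "z = lf y" then show ?case using yC by auto
    qed
  qed
next
  assume "w = a \<or> on_side w a \<or> (\<exists>c\<in>C - {r}. a = lf c \<and> on_side w c)"
  then show "(w, a) \<in> E\<^sup>*"
  proof (elim disjE bexE conjE)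
    fix c assume "c \<in> C - {r}" "a = lf c" "on_side w c"
    then show ?thesis using on_side_rtrancl leaf_edge by (meson rtrancl.rtrancl_into_rtrancl)
  qed (auto simp: on_side_rtrancl)
qed

lemma leaf_ancestor_iff: assumes "c \<in> C - {r}" shows "(w, lf c) \<in> E\<^sup>* \<longleftrightarrow> w = lf c \<or> on_side w c"
  unfolding ancestor_iff using assms lf_eq_iff lf_in_X cycle_notin_X on_side_cycle by metis

lemma lca_same_side: assumes "c \<in> C - {r}" "d \<in> C - {r}" "c \<noteq> d" "on_side c d"
  shows "lca V E (lf c) (lf d) = c"
proof (rule lca_eqI[OF acyclic_E])
  show "c \<in> V" using assms V_eq by auto
  show "(c, lf c) \<in> E\<^sup>*" using leaf_ancestor_iff[OF assms(1)] on_side_refl assms by auto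
  show "(c, lf d) \<in> E\<^sup>*" using leaf_ancestor_iff[OF assms(2)] assms by auto
  fix w assume w: "(w, lf c) \<in> E\<^sup>*" "(w, lf d) \<in> E\<^sup>*"
  then have "w = lf c \<or> on_side w c" "w = lf d \<or> on_side w d" using leaf_ancestor_iff assms by auto
  then have "on_side w c" using assms lf_eq_iff lf_in_X cycle_notin_X on_side_cycle by metis
  then show "(w, c) \<in> E\<^sup>*" by (rule on_side_rtrancl)
qed

lemma on_side_P_inner: assumes "0 < i" "i < length P - 1" "on_side w (P ! i)"
  shows "\<exists>i'\<le>i. w = P ! i'"
  using assms(3) unfolding on_side_def
proof (elim disjE exE conjE)
  fix i' j' assume "i' \<le> j'" "j' < length P" "w = P ! i'" "P ! i = P ! j'"
  then show ?thesis using P_nth_eq_iff[of i j'] P_ne assms by auto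
next
  fix i' j' assume "j' < length Q" "P ! i = Q ! j'"
  then show ?thesis using P_inner_notin_Q[OF assms(1, 2)] by (metis nth_mem)
qed

lemma on_side_Q_inner: "0 < i \<Longrightarrow> i < length Q - 1 \<Longrightarrow> on_side w (Q ! i) \<Longrightarrow> \<exists>i'\<le>i. w = Q ! i'"
  using elementary_cycle.on_side_P_inner[OF swap_sides] unfolding on_side_swap .

lemma lca_opposite_sides: assumes i: "0 < i" "i < length P - 1" and j: "0 < j" "j < length Q - 1"
  shows "lca V E (lf (P ! i)) (lf (Q ! j)) = r"
proof (rule lca_eqI[OF acyclic_E])
  have iP: "i < length P" and jQ: "j < length Q" using i j by linarith+
  have c: "P ! i \<in> C - {r}" using P_nth_neq_root[of i] iP i by auto
  have d: "Q ! j \<in> C - {r}" using Q_nth_neq_root[of j] jQ j by auto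
  show "r \<in> V" using V_eq root_in_cycle by auto
  have "on_side r (P ! i)" unfolding on_side_def using iP P_nth_0 by (metis le0)
  then show "(r, lf (P ! i)) \<in> E\<^sup>*" using leaf_ancestor_iff[OF c] by auto
  have "on_side r (Q ! j)" unfolding on_side_def using jQ Q_nth_0 by (metis le0)
  then show "(r, lf (Q ! j)) \<in> E\<^sup>*" using leaf_ancestor_iff[OF d] by auto
  fix w assume w: "(w, lf (P ! i)) \<in> E\<^sup>*" "(w, lf (Q ! j)) \<in> E\<^sup>*"
  then have "w = lf (P ! i) \<or> on_side w (P ! i)" "w = lf (Q ! j) \<or> on_side w (Q ! j)"
    using leaf_ancestor_iff c d by auto
  moreover have "P ! i \<noteq> Q ! j" using P_inner_notin_Q[OF i] jQ by auto
  ultimately have "on_side w (P ! i)" "on_side w (Q ! j)"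
    using c d lf_eq_iff lf_in_X cycle_notin_X on_side_cycle by metis+
  then obtain i' j' where "i' \<le> i" "w = P ! i'" "j' \<le> j" "w = Q ! j'"
    using on_side_P_inner[OF i] on_side_Q_inner[OF j] by metis
  moreover have "i' < length P" "j' < length Q" using calculation iP jQ by linarith+
  ultimately have "w \<in> set P \<inter> set Q" "w \<noteq> h"
    using P_nth_neq_hybrid[of i'] i nth_mem[of j' Q] nth_mem[of i' P] by auto
  then have "w = r" using sides_inter by auto
  then show "(w, r) \<in> E\<^sup>*" by simp
qed


lemma card_cycle: "card C = length P + length Q - 2"
proof -
  have "card C + card (set P \<inter> set Q) = card (set P) + card (set Q)"
    using card_Un_Int[of "set P" "set Q"] by simp
  moreover have "card (set P \<inter> set Q) = 2" using sides_inter root_neq_hybrid by simp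
  moreover have "card (set P) = length P" "card (set Q) = length Q" using P_distinct Q_distinct
    by (auto simp: distinct_card)
  ultimately show ?thesis by simp
qed

lemma card_leaves: "card X + 1 = card C"
proof -
  have "card X = card (C - {r})" using lf_bij by (simp add: bij_betw_same_card)
  also have "\<dots> = card C - 1" using root_in_cycle by simp
  finally show ?thesis using root_in_cycle card_gt_0_iff[of C] by auto
qed

lemma root_hybrid_edge: assumes "(r, h) \<in> E" shows "length P = 2 \<or> length Q = 2"
  using assms[unfolded edge_iff]
proof (elim disjE exE conjE)
  fix i assume a: "Suc i < length P" "r = P ! i" "h = P ! Suc i"
  then have "i = 0" using P_nth_eq_iff[of i 0] P_ne P_nth_0 by auto
  moreover have "Suc i = length P - 1"
    using a P_nth_eq_iff[of "Suc i" "length P - 1"] P_ne P_nth_last by auto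
  ultimately show ?thesis by auto
next
  fix i assume a: "Suc i < length Q" "r = Q ! i" "h = Q ! Suc i"
  then have "i = 0" using Q_nth_eq_iff[of i 0] Q_ne Q_nth_0 by auto
  moreover have "Suc i = length Q - 1"
    using a Q_nth_eq_iff[of "Suc i" "length Q - 1"] Q_ne Q_nth_last by auto
  ultimately show ?thesis by auto
qed auto

lemma weak_sides_imp:
  assumes sides: "elementary_sides V E X P' Q'" and weak: "weak_sides P' Q'"
  shows "(r, h) \<in> E \<or> card (V - X) = 4"
proof -
  obtain lf' where "elementary_cycle P' Q' X lf' V E"
    using sides by (rule elementary_cycle_if_sides)
  then interpret other: elementary_cycle P' Q' X lf' V E .
  have "hd P' = net_root V E" "hybrid E (last P')"
    using sides unfolding elementary_sides_def by auto
  then have r': "hd P' = r" and h': "last P' = h"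
    using net_root_eq hybrid_iff other.hybrid_in_cycle other.V_eq by auto
  have "V - X = set P' \<union> set Q'" using other.V_eq other.cycle_leaves_disjoint by auto
  then have card: "card (V - X) = length P' + length Q' - 2" using other.card_cycle by simp
  from weak show ?thesis
    unfolding weak_sides_def
  proof (elim disjE conjE)
    assume "length P' = 2"
    then show ?thesis using other.P_edge[of 0] other.P_nth_0 other.P_nth_last r' h' by simp
  next
    assume "length Q' = 2"
    then show ?thesis using other.Q_edge[of 0] other.Q_nth_0 other.Q_nth_last r' h' by simp
  qed (use card in simp)
qed

lemma sides_elementary: "elementary_sides V E X P Q"
  unfolding elementary_sides_def Let_def
  using P_length Q_length not_both_arcs P_distinct Q_distinct net_root_eq hd_Q last_Q
    hybrid_iff[of h] hybrid_in_cycle V_eq sides_inter cycle_leaves_disjoint card_leaves lf_bij E_eq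
  by auto

lemma strong_if_long_sides: assumes "length P \<ge> 3" "length Q \<ge> 3" "\<not> (length P = 3 \<and> length Q = 3)"
  shows "strong V E X"
  unfolding strong_def
proof (intro conjI allI impI)
  show "elementary V E X" unfolding elementary_def using sides_elementary by blast
  fix P' Q' assume es: "elementary_sides V E X P' Q'"
  show "\<not> weak_sides P' Q'"
  proof
    assume "weak_sides P' Q'"
    from weak_sides_imp[OF es this] show False
    proof
      assume "(r, h) \<in> E" then show False using root_hybrid_edge assms by auto
    next
      assume c4: "card (V - X) = 4"
      have "V - X = C" using V_eq cycle_leaves_disjoint by auto
      then have "card (V - X) = length P + length Q - 2" using card_cycle by simp
      then show False using assms c4 by auto
    qed
  qed
qed

lemma quasi_discriminatingI: assumes P: "\<And>i. Suc i < length P - 1 \<Longrightarrow> t (P ! i) \<noteq> t (P ! Suc i)"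
  and Q: "\<And>i. Suc i < length Q - 1 \<Longrightarrow> t (Q ! i) \<noteq> t (Q ! Suc i)"
  shows "quasi_discriminating V E X t"
  unfolding quasi_discriminating_def
proof (intro ballI impI, clarify)
  fix u w assume e: "(u, w) \<in> E" "u \<notin> X" "w \<notin> X" "\<not> hybrid E w" and eq: "t u = t w"
  have "w \<in> V" using e edges_V by auto
  then have wh: "w \<noteq> h" using hybrid_iff e by auto
  from e(1)[unfolded edge_iff] have "t u \<noteq> t w"
  proof (elim disjE exE conjE)
    fix i assume "Suc i < length P" "u = P ! i" "w = P ! Suc i"
    moreover have "Suc i \<noteq> length P - 1" using calculation wh P_nth_last by auto
    ultimately show ?thesis using P[of i] by auto
  next
    fix i assume "Suc i < length Q" "u = Q ! i" "w = Q ! Suc i"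
    moreover have "Suc i \<noteq> length Q - 1" using calculation wh Q_nth_last by auto
    ultimately show ?thesis using Q[of i] by auto
  next
    assume "u \<in> C - {r}" "w = lf u" then show ?thesis using lf_in_X e by auto
  qed
  then show False using eq by simp
qed




lemma cycle_edge_labels_differ:
  assumes "labeled_network V E X t" "quasi_discriminating V E X t"
    and "(u, w) \<in> E" "u \<in> C" "w \<in> C" "w \<noteq> h"
  shows "(t u = L1) \<noteq> (t w = L1)"
proof (rule label_neq_imp_L1_neq)
  show "t u \<noteq> Odot" "t w \<noteq> Odot"
    using assms(1,4,5) cycle_notin_X V_eq unfolding labeled_network_def by auto
  show "t u \<noteq> t w"
    using assms(2-6) cycle_notin_X hybrid_iff V_eq unfolding quasi_discriminating_def by auto
qed

lemma tl_P_split: "tl P = butlast (tl P) @ [h]"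
proof -
  have "tl P \<noteq> []" using P_length by (cases P) auto
  then show ?thesis by (metis append_butlast_last_id last_tl)
qed

lemma set_tl_P: "set (tl P) = set P - {r}"
proof -
  have "P = r # tl P" using P_ne by simp
  then show ?thesis using P_distinct by (metis Diff_insert_absorb distinct.simps(2) list.simps(15))
qed

lemma nth_butlast_tl_P: "i < length P - 2 \<Longrightarrow> butlast (tl P) ! i = P ! Suc i"
  by (simp add: nth_butlast nth_tl)

lemma side_caterpillar_order:
  assumes ln: "labeled_network V E X t" and qd: "quasi_discriminating V E X t"
    and ex: "explains_via G V E X t \<phi>" and len: "length P \<ge> 3"
  shows "caterpillar_order G (map (inv_into (fst G) \<phi> \<circ> lf) (tl P)) (map (\<lambda>c. t c = L1) (butlast (tl P)))"
proof -
  let ?xs = "map lf (tl P)"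
  let ?ys = "map (inv_into (fst G) \<phi> \<circ> lf) (tl P)"
  have tl: "set (tl P) \<subseteq> C - {r}" "distinct (tl P)" using set_tl_P P_distinct
    by (auto simp: distinct_tl)
  have "inj_on lf (C - {r})" using lf_bij by (simp add: bij_betw_def)
  then have xs: "distinct ?xs" "set ?xs \<subseteq> X"
    using tl lf_in_X by (auto simp: distinct_map intro: inj_on_subset)
  have ys: "?ys = map (inv_into (fst G) \<phi>) ?xs" by simp
  have adj: "{?ys ! i, ?ys ! j} \<in> snd G \<longleftrightarrow> t (lca V E (?xs ! i) (?xs ! j)) = L1"
    if "i < length ?xs" "j < length ?xs" "i \<noteq> j" for i j
    using explains_via_nth(4)[OF ex xs that] unfolding ys .
  show ?thesis
    unfolding caterpillar_order_def
  proof (intro conjI allI impI)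
    show "distinct ?ys" using explains_via_nth(1)[OF ex xs] unfolding ys .
    show "2 \<le> length ?ys" "length (map (\<lambda>c. t c = L1) (butlast (tl P))) + 1 = length ?ys"
      using len by auto
  next
    fix i assume "Suc i < length (map (\<lambda>c. t c = L1) (butlast (tl P)))"
    then have i: "Suc (Suc i) < length P - 1" by simp
    have differ: "(t (P ! Suc i) = L1) \<noteq> (t (P ! Suc (Suc i)) = L1)"
      using cycle_edge_labels_differ[OF ln qd P_edge[of "Suc i"]] P_nth_neq_hybrid i by auto
    have "i < length P - 2" "Suc i < length P - 2" using i by linarith+
    then show
      "map (\<lambda>c. t c = L1) (butlast (tl P)) ! i \<noteq> map (\<lambda>c. t c = L1) (butlast (tl P)) ! Suc i"
      using nth_butlast_tl_P differ by simp
  next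
    fix i j assume ij: "i < j \<and> j < length ?ys"
    then have ij': "Suc i < Suc j" "Suc j < length P" by auto
    have "P ! Suc i \<in> C - {r}" "P ! Suc j \<in> C - {r}" "P ! Suc i \<noteq> P ! Suc j"
      using ij' P_nth_neq_root P_nth_eq_iff by auto
    moreover have "on_side (P ! Suc i) (P ! Suc j)"
      unfolding on_side_def using ij' less_imp_le by blast
    ultimately have "lca V E (?xs ! i) (?xs ! j) = P ! Suc i"
      using lca_same_side ij by (simp add: nth_tl)
    then show "{?ys ! i, ?ys ! j} \<in> snd G \<longleftrightarrow> map (\<lambda>c. t c = L1) (butlast (tl P)) ! i"
      using adj[of i j] ij nth_butlast_tl_P[of i] by auto
  qed
qed


lemma root_label_differs:
  assumes ln: "labeled_network V E X t" and qd: "quasi_discriminating V E X t" and "length P \<ge> 3"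
  shows "(t r = L1) \<noteq> (t (P ! 1) = L1)"
  using cycle_edge_labels_differ[OF ln qd P_edge[of 0]] P_nth_0 P_nth_neq_hybrid[of 1] assms(3)
    root_in_cycle nth_mem[of 1 P] by simp

lemma cross_adjacency:
  assumes ex: "explains_via G V E X t \<phi>"
    and i: "0 < i" "i < length P - 1" and j: "0 < j" "j < length Q - 1"
  defines "\<psi> \<equiv> inv_into (fst G) \<phi> \<circ> lf"
  shows "{\<psi> (P ! i), \<psi> (Q ! j)} \<in> snd G \<longleftrightarrow> t r = L1"
proof -
  have bij: "bij_betw (inv_into (fst G) \<phi>) X (fst G)" "bij_betw \<phi> (fst G) X"
    using ex bij_betw_inv_into unfolding explains_via_def by blast+
  have c: "P ! i \<in> C - {r}" "Q ! j \<in> C - {r}" "P ! i \<noteq> Q ! j"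
    using i j P_nth_neq_root Q_nth_neq_root P_inner_notin_Q[OF i] by auto
  then have X: "lf (P ! i) \<in> X" "lf (Q ! j) \<in> X" "lf (P ! i) \<noteq> lf (Q ! j)"
    using lf_in_X lf_eq_iff by blast+
  then have "\<psi> (P ! i) \<noteq> \<psi> (Q ! j)" "\<psi> (P ! i) \<in> fst G" "\<psi> (Q ! j) \<in> fst G"
    unfolding \<psi>_def o_def using bij(1) by (auto simp: bij_betw_def inj_on_def)
  moreover have "\<phi> (\<psi> (P ! i)) = lf (P ! i)" "\<phi> (\<psi> (Q ! j)) = lf (Q ! j)"
    using c lf_in_X bij unfolding \<psi>_def by (auto simp: bij_betw_def f_inv_into_f)
  ultimately have "{\<psi> (P ! i), \<psi> (Q ! j)} \<in> snd G \<longleftrightarrow> t (lca V E (lf (P ! i)) (lf (Q ! j))) = L1"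
    using ex unfolding explains_via_def by metis
  then show ?thesis using lca_opposite_sides[OF i j] by simp
qed

lemma cycle_enumeration:
  "distinct (butlast (tl P) @ butlast (tl Q) @ [h])"
  "set (butlast (tl P) @ butlast (tl Q) @ [h]) = C - {r}"
proof -
  note P = tl_P_split set_tl_P
  have Q: "tl Q = butlast (tl Q) @ [h]" "set (tl Q) = set Q - {r}"
    using elementary_cycle.tl_P_split[OF swap_sides] elementary_cycle.set_tl_P[OF swap_sides]
    unfolding last_Q hd_Q .
  have dist: "distinct (butlast (tl P) @ [h])" "distinct (butlast (tl Q) @ [h])"
    by (simp_all only: P(1)[symmetric] Q(1)[symmetric] distinct_tl P_distinct Q_distinct)
  have "set (tl P) = insert h (set (butlast (tl P)))" "set (tl Q) = insert h (set (butlast (tl Q)))"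
    using arg_cong[where f = set, OF P(1)] arg_cong[where f = set, OF Q(1)] by simp_all
  then have sets: "set (butlast (tl P)) = set P - {r, h}" "set (butlast (tl Q)) = set Q - {r, h}"
    using dist P(2) Q(2) by auto
  then have "set (butlast (tl P)) \<inter> set (butlast (tl Q)) = {}" using sides_inter by blast
  with dist show "distinct (butlast (tl P) @ butlast (tl Q) @ [h])" by simp
  show "set (butlast (tl P) @ butlast (tl Q) @ [h]) = C - {r}"
    unfolding set_append sets using hybrid_in_cycle root_neq_hybrid by auto
qed

end

section \<open>Polar-cats\<close>

lemma fst_induced [simp]: "fst (induced G S) = S"
  by (simp add: induced_def)

lemma is_graph_induced: "is_graph G \<Longrightarrow> S \<subseteq> fst G \<Longrightarrow> is_graph (induced G S)"
  unfolding is_graph_def induced_def by (auto intro: finite_subset)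

lemma del_vert_induced:
  "del_vert (induced G S) v = (S - {v}, {e \<in> snd G. e \<subseteq> S - {v}})"
  unfolding del_vert_def induced_def by auto

lemma edge_within_or_across:
  assumes "is_graph G" "e \<in> snd G" "e \<subseteq> A \<union> B"
  shows "e \<subseteq> A \<or> e \<subseteq> B \<or> (\<exists>y\<in>A. \<exists>z\<in>B. e = {y, z})"
proof -
  obtain a c where "e = {a, c}" using assms(1, 2) unfolding is_graph_def by (meson card_2_iff)
  then show ?thesis using assms(3) by (auto simp: insert_commute)
qed

context
  fixes G :: "'a graph" and V1 V2 :: "'a set" and v :: 'a
  assumes G: "is_graph G" and union: "fst G = V1 \<union> V2" and inter: "V1 \<inter> V2 = {v}"
begin

lemma del_vert_eq_disj_union_iff:
  "del_vert G v = disj_union (del_vert (induced G V1) v) (del_vert (induced G V2) v) \<longleftrightarrow>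
     (\<forall>y\<in>V1 - {v}. \<forall>z\<in>V2 - {v}. {y, z} \<notin> snd G)"
proof -
  have "{e \<in> snd G. e \<subseteq> fst G - {v}} = {e \<in> snd G. e \<subseteq> V1 - {v}} \<union> {e \<in> snd G. e \<subseteq> V2 - {v}}
      \<longleftrightarrow> (\<forall>y\<in>V1 - {v}. \<forall>z\<in>V2 - {v}. {y, z} \<notin> snd G)"
  proof
    assume eq:
      "{e \<in> snd G. e \<subseteq> fst G - {v}} = {e \<in> snd G. e \<subseteq> V1 - {v}} \<union> {e \<in> snd G. e \<subseteq> V2 - {v}}"
    show "\<forall>y\<in>V1 - {v}. \<forall>z\<in>V2 - {v}. {y, z} \<notin> snd G"
    proof (intro ballI notI)
      fix y z assume yz: "y \<in> V1 - {v}" "z \<in> V2 - {v}" "{y, z} \<in> snd G"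
      then have "{y, z} \<in> {e \<in> snd G. e \<subseteq> fst G - {v}}" using union by auto
      then have "{y, z} \<subseteq> V1 - {v} \<or> {y, z} \<subseteq> V2 - {v}" unfolding eq by blast
      then show False using yz inter by auto
    qed
  next
    assume no_cross: "\<forall>y\<in>V1 - {v}. \<forall>z\<in>V2 - {v}. {y, z} \<notin> snd G"
    show "{e \<in> snd G. e \<subseteq> fst G - {v}} = {e \<in> snd G. e \<subseteq> V1 - {v}} \<union> {e \<in> snd G. e \<subseteq> V2 - {v}}"
    proof (intro equalityI subsetI)
      fix e assume e: "e \<in> {e \<in> snd G. e \<subseteq> fst G - {v}}"
      then have "e \<subseteq> V1 - {v} \<or> e \<subseteq> V2 - {v} \<or> (\<exists>y\<in>V1 - {v}. \<exists>z\<in>V2 - {v}. e = {y, z})"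
        using edge_within_or_across[OF G, of e "V1 - {v}" "V2 - {v}"] union by auto
      then show "e \<in> {e \<in> snd G. e \<subseteq> V1 - {v}} \<union> {e \<in> snd G. e \<subseteq> V2 - {v}}"
        using e no_cross by auto
    qed (use union in auto)
  qed
  moreover have "del_vert G v = (fst G - {v}, {e \<in> snd G. e \<subseteq> fst G - {v}})"
    by (simp add: del_vert_def induced_def)
  moreover have "disj_union (del_vert (induced G V1) v) (del_vert (induced G V2) v) =
      (fst G - {v}, {e \<in> snd G. e \<subseteq> V1 - {v}} \<union> {e \<in> snd G. e \<subseteq> V2 - {v}})"
    using union by (simp add: disj_union_def del_vert_induced Un_Diff)
  ultimately show ?thesis by simp
qed

lemma del_vert_eq_graph_join_iff:
  "del_vert G v = graph_join (del_vert (induced G V1) v) (del_vert (induced G V2) v) \<longleftrightarrow>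
     (\<forall>y\<in>V1 - {v}. \<forall>z\<in>V2 - {v}. {y, z} \<in> snd G)"
proof -
  let ?cross = "{{y, z} | y z. y \<in> V1 - {v} \<and> z \<in> V2 - {v}}"
  have "{e \<in> snd G. e \<subseteq> fst G - {v}} = {e \<in> snd G. e \<subseteq> V1 - {v}} \<union> {e \<in> snd G. e \<subseteq> V2 - {v}} \<union> ?cross
      \<longleftrightarrow> (\<forall>y\<in>V1 - {v}. \<forall>z\<in>V2 - {v}. {y, z} \<in> snd G)"
  proof
    assume eq:
      "{e \<in> snd G. e \<subseteq> fst G - {v}} = {e \<in> snd G. e \<subseteq> V1 - {v}} \<union> {e \<in> snd G. e \<subseteq> V2 - {v}} \<union> ?cross"
    show "\<forall>y\<in>V1 - {v}. \<forall>z\<in>V2 - {v}. {y, z} \<in> snd G"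
    proof (intro ballI)
      fix y z assume "y \<in> V1 - {v}" "z \<in> V2 - {v}"
      then have "{y, z} \<in> ?cross" by blast
      then have "{y, z} \<in> {e \<in> snd G. e \<subseteq> fst G - {v}}" unfolding eq by blast
      then show "{y, z} \<in> snd G" by simp
    qed
  next
    assume all_cross: "\<forall>y\<in>V1 - {v}. \<forall>z\<in>V2 - {v}. {y, z} \<in> snd G"
    show "{e \<in> snd G. e \<subseteq> fst G - {v}} = {e \<in> snd G. e \<subseteq> V1 - {v}} \<union> {e \<in> snd G. e \<subseteq> V2 - {v}} \<union> ?cross"
    proof (intro equalityI subsetI)
      fix e assume e: "e \<in> {e \<in> snd G. e \<subseteq> fst G - {v}}"
      then have "e \<subseteq> V1 - {v} \<or> e \<subseteq> V2 - {v} \<or> (\<exists>y\<in>V1 - {v}. \<exists>z\<in>V2 - {v}. e = {y, z})"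
        using edge_within_or_across[OF G, of e "V1 - {v}" "V2 - {v}"] union by auto
      then show "e \<in> {e \<in> snd G. e \<subseteq> V1 - {v}} \<union> {e \<in> snd G. e \<subseteq> V2 - {v}} \<union> ?cross"
        using e by blast
    qed (use union all_cross in auto)
  qed
  moreover have "del_vert G v = (fst G - {v}, {e \<in> snd G. e \<subseteq> fst G - {v}})"
    by (simp add: del_vert_def induced_def)
  moreover have "graph_join (del_vert (induced G V1) v) (del_vert (induced G V2) v) =
      (fst G - {v}, {e \<in> snd G. e \<subseteq> V1 - {v}} \<union> {e \<in> snd G. e \<subseteq> V2 - {v}} \<union> ?cross)"
    using union by (simp add: graph_join_def del_vert_induced Un_Diff)
  ultimately show ?thesis by simp
qed

end

text \<open>The normal form behind both characterisations; b is the adjacency across the two parts,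
  i.e. whether G - v is their join.\<close>

definition polar_order :: "'a graph \<Rightarrow> bool" where
  "polar_order G \<longleftrightarrow> (\<exists>ys zs v ls1 ls2 b.
     distinct (ys @ zs @ [v]) \<and> set (ys @ zs @ [v]) = fst G \<and>
     ys \<noteq> [] \<and> zs \<noteq> [] \<and> length ys + length zs \<ge> 3 \<and>
     caterpillar_order G (ys @ [v]) ls1 \<and> caterpillar_order G (zs @ [v]) ls2 \<and>
     ls1 ! 0 \<noteq> b \<and> ls2 ! 0 \<noteq> b \<and> (\<forall>y\<in>set ys. \<forall>z\<in>set zs. {y, z} \<in> snd G \<longleftrightarrow> b))"

lemma caterpillar_order_if_cherry_in_caterpillar:
  assumes G: "is_graph G" and S: "S \<subseteq> fst G" "v \<in> S"
    and cherry: "cherry_in_caterpillar (induced G S) v"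
  obtains ys ls where "caterpillar_order G (ys @ [v]) ls" "set (ys @ [v]) = S"
    "graph_connected (induced G S) \<longleftrightarrow> ls ! 0"
proof -
  obtain V :: "nat set" and E X t \<phi> y where cotree: "disc_cotree_via (induced G S) V E X t \<phi>"
    and cat: "caterpillar V E X" and cherry: "cherry E X (\<phi> v) y"
    using cherry unfolding cherry_in_caterpillar_def by blast
  have "v \<in> fst (induced G S)" using S by simp
  from caterpillar_order_if_cherry[OF cotree cat cherry this]
  obtain ws ls where ord: "caterpillar_order (induced G S) ws ls" and ws: "set ws = S" "last ws = v"
    by auto
  have "ws \<noteq> []" using ord unfolding caterpillar_order_def by auto
  then have ws_eq: "butlast ws @ [v] = ws" using append_butlast_last_id ws(2) by metis
  show ?thesis
  proof (rule that)
    show "caterpillar_order G (butlast ws @ [v]) ls"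
      using ord caterpillar_order_induced[OF ws(1)] ws_eq by simp
    show "set (butlast ws @ [v]) = S" using ws_eq ws(1) by simp
    show "graph_connected (induced G S) \<longleftrightarrow> ls ! 0"
      using graph_connected_iff_caterpillar_order[OF is_graph_induced[OF G S(1)] ord] ws by simp
  qed
qed

lemma polar_order_if_polar_cat:
  assumes G: "is_graph G" and "polar_cat G"
  shows "polar_order G"
proof -
  obtain v V1 V2 where polar: "polar_cat_at G v V1 V2" using assms unfolding polar_cat_def by blast
  then have V: "V1 \<subseteq> fst G" "V2 \<subseteq> fst G" "v \<in> V1" "v \<in> V2" "fst G = V1 \<union> V2" "V1 \<inter> V2 = {v}"
      "card V1 > 1" "card V2 > 1" "card (fst G) \<ge> 4"
    and cherries: "cherry_in_caterpillar (induced G V1) v" "cherry_in_caterpillar (induced G V2) v"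
    unfolding polar_cat_at_def pseudo_cograph_def by auto
  obtain ys ls1 where ys: "caterpillar_order G (ys @ [v]) ls1" "set (ys @ [v]) = V1"
    "graph_connected (induced G V1) \<longleftrightarrow> ls1 ! 0"
    using caterpillar_order_if_cherry_in_caterpillar[OF G V(1, 3) cherries(1)] by blast
  obtain zs ls2 where zs: "caterpillar_order G (zs @ [v]) ls2" "set (zs @ [v]) = V2"
    "graph_connected (induced G V2) \<longleftrightarrow> ls2 ! 0"
    using caterpillar_order_if_cherry_in_caterpillar[OF G V(2, 4) cherries(2)] by blast
  have "distinct (ys @ [v])" "distinct (zs @ [v])"
    using ys(1) zs(1) unfolding caterpillar_order_def by auto
  then have sets: "set ys = V1 - {v}" "set zs = V2 - {v}" "card V1 = length ys + 1"
    "card V2 = length zs + 1"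
    using ys(2) zs(2) by (auto simp: distinct_card[symmetric])
  have dist: "distinct (ys @ zs @ [v])"
    using \<open>distinct (ys @ [v])\<close> \<open>distinct (zs @ [v])\<close> sets V(6) by auto
  have set: "set (ys @ zs @ [v]) = fst G" using ys(2) zs(2) V(5) by auto
  have "card (fst G) = length ys + length zs + 1"
    using distinct_card[OF dist] unfolding set by simp
  then have len: "ys \<noteq> []" "zs \<noteq> []" "length ys + length zs \<ge> 3" using sets V(7-9) by auto
  from polar have "(graph_connected (induced G V1) \<and> graph_connected (induced G V2) \<and>
         del_vert G v = disj_union (del_vert (induced G V1) v) (del_vert (induced G V2) v)) \<or>
      (\<not> graph_connected (induced G V1) \<and> \<not> graph_connected (induced G V2) \<and>
         del_vert G v = graph_join (del_vert (induced G V1) v) (del_vert (induced G V2) v))"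
    unfolding polar_cat_at_def by blast
  then obtain b where "ls1 ! 0 \<noteq> b" "ls2 ! 0 \<noteq> b" "\<forall>y\<in>set ys. \<forall>z\<in>set zs. {y, z} \<in> snd G \<longleftrightarrow> b"
  proof (elim disjE conjE)
    assume "graph_connected (induced G V1)" "graph_connected (induced G V2)"
      "del_vert G v = disj_union (del_vert (induced G V1) v) (del_vert (induced G V2) v)"
    then show thesis
      using that[of False] ys(3) zs(3) sets del_vert_eq_disj_union_iff[OF G V(5, 6)] by simp
  next
    assume "\<not> graph_connected (induced G V1)" "\<not> graph_connected (induced G V2)"
      "del_vert G v = graph_join (del_vert (induced G V1) v) (del_vert (induced G V2) v)"
    then show thesis
      using that[of True] ys(3) zs(3) sets del_vert_eq_graph_join_iff[OF G V(5, 6)] by simp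
  qed
  then show ?thesis
    unfolding polar_order_def using dist set len ys(1) zs(1)
    by (intro exI[of _ ys] exI[of _ zs] exI[of _ v] exI[of _ ls1] exI[of _ ls2] exI[of _ b]) auto
qed

lemma polar_cat_if_polar_order:
  assumes G: "is_graph G" and "polar_order G"
  shows "polar_cat G"
proof -
  obtain ys zs v ls1 ls2 b where dist: "distinct (ys @ zs @ [v])"
    and set: "set (ys @ zs @ [v]) = fst G"
    and len: "ys \<noteq> []" "zs \<noteq> []" "length ys + length zs \<ge> 3"
    and ord: "caterpillar_order G (ys @ [v]) ls1" "caterpillar_order G (zs @ [v]) ls2"
    and first: "ls1 ! 0 \<noteq> b" "ls2 ! 0 \<noteq> b"
    and cross: "\<forall>y\<in>set ys. \<forall>z\<in>set zs. {y, z} \<in> snd G \<longleftrightarrow> b"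
    using assms(2) unfolding polar_order_def by blast
  define V1 where "V1 = set (ys @ [v])"
  define V2 where "V2 = set (zs @ [v])"
  have V: "V1 \<subseteq> fst G" "V2 \<subseteq> fst G" "v \<in> fst G" "fst G = V1 \<union> V2" "V1 \<inter> V2 = {v}"
    "V1 - {v} = set ys" "V2 - {v} = set zs"
    using set dist unfolding V1_def V2_def by auto
  have card: "card V1 = length ys + 1" "card V2 = length zs + 1"
    "card (fst G) = length ys + length zs + 1"
    using dist distinct_card[OF dist] unfolding set V1_def V2_def by (auto simp: distinct_card)
  have ord_induced: "caterpillar_order (induced G V1) (ys @ [v]) ls1"
    "caterpillar_order (induced G V2) (zs @ [v]) ls2"
    using ord caterpillar_order_induced unfolding V1_def V2_def by blast+
  have "graph_connected (induced G V1) \<longleftrightarrow> ls1 ! 0" "graph_connected (induced G V2) \<longleftrightarrow> ls2 ! 0"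
    using graph_connected_iff_caterpillar_order[OF is_graph_induced[OF G V(1)] ord_induced(1)]
      graph_connected_iff_caterpillar_order[OF is_graph_induced[OF G V(2)] ord_induced(2)]
    unfolding V1_def V2_def by simp_all
  moreover have "caterpillar_explainable (induced G V1) \<and> cherry_in_caterpillar (induced G V1) v"
    "caterpillar_explainable (induced G V2) \<and> cherry_in_caterpillar (induced G V2) v"
    using caterpillar_explainable_if_caterpillar_order ord_induced unfolding V1_def V2_def
      by fastforce+
  moreover have "cograph (induced G V1)" "cograph (induced G V2)"
    using cograph_if_caterpillar_order ord_induced unfolding V1_def V2_def by fastforce+
  moreover have "(\<forall>y\<in>V1 - {v}. \<forall>z\<in>V2 - {v}. {y, z} \<in> snd G) \<longleftrightarrow> b"
    "(\<forall>y\<in>V1 - {v}. \<forall>z\<in>V2 - {v}. {y, z} \<notin> snd G) \<longleftrightarrow> \<not> b"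
    using cross len(1, 2) unfolding V(6, 7) by (metis list.set_sel(1))+
  ultimately have "polar_cat_at G v V1 V2"
    unfolding polar_cat_at_def pseudo_cograph_def
    using V card len first del_vert_eq_disj_union_iff[OF G V(4, 5)]
      del_vert_eq_graph_join_iff[OF G V(4, 5)]
    by (cases b) auto
  then show ?thesis unfolding polar_cat_def by blast
qed

section \<open>Polar-cats as strong elementary networks\<close>

locale standard_elementary =
  fixes k m :: nat
  assumes k_pos: "1 \<le> k" and m_pos: "1 \<le> m"
begin

definition n :: nat where "n = k + m + 1"
definition eP :: "nat list" where "eP = [0..<k + 1] @ [n]"
definition eQ :: "nat list" where "eQ = 0 # [k + 1..<n] @ [n]"
definition eX :: "nat set" where "eX = {n + 1..<2 * n + 1}"
definition elf :: "nat \<Rightarrow> nat" where "elf c = c + n"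
definition eV :: "nat set" where "eV = set eP \<union> set eQ \<union> eX"
definition eE :: "(nat \<times> nat) set" where
  "eE = set (zip eP (tl eP)) \<union> set (zip eQ (tl eQ)) \<union> {(c, elf c) | c. c \<in> set eP \<union> set eQ - {hd eP}}"

lemma length_eP: "length eP = k + 2" and length_eQ: "length eQ = m + 2"
  unfolding eP_def eQ_def n_def by auto

lemma eP_nth: "i \<le> k \<Longrightarrow> eP ! i = i" and eP_last: "eP ! (k + 1) = n"
  unfolding eP_def by (auto simp: nth_append)

lemma eQ_nth: "j \<le> m \<Longrightarrow> eQ ! j = (if j = 0 then 0 else k + j)" and eQ_last: "eQ ! (m + 1) = n"
  unfolding eQ_def n_def by (auto simp: nth_append nth_Cons')

lemma cycle_set: "set eP \<union> set eQ = {0..n}"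
  unfolding eP_def eQ_def n_def by auto

lemma leaves_list: "distinct (map elf [1..<n + 1])" "set (map elf [1..<n + 1]) = eX"
proof -
  show "distinct (map elf [1..<n + 1])" unfolding elf_def by (simp add: distinct_map del: upt_Suc)
  have "elf ` {1..<n + 1} = {1 + n..<n + 1 + n}" unfolding elf_def by simp
  then show "set (map elf [1..<n + 1]) = eX" unfolding eX_def by (simp add: mult_2 del: upt_Suc)
qed

lemma hd_eP: "hd eP = 0"
  unfolding eP_def by (simp del: upt_Suc add: upt_conv_Cons)

sublocale cyc: elementary_cycle eP eQ eX elf eV eE
proof
  show "2 \<le> length eP" "2 \<le> length eQ" "\<not> (length eP = 2 \<and> length eQ = 2)"
    using length_eP length_eQ k_pos by auto
  show "distinct eP" "distinct eQ" unfolding eP_def eQ_def n_def by auto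
  show "hd eQ = hd eP" "last eQ = last eP" unfolding hd_eP unfolding eP_def eQ_def by simp_all
  show "set eP \<inter> set eQ = {hd eP, last eP}" unfolding eP_def eQ_def n_def using k_pos m_pos by auto
  show "(set eP \<union> set eQ) \<inter> eX = {}" unfolding cycle_set eX_def by auto
  show "bij_betw elf (set eP \<union> set eQ - {hd eP}) eX"
    unfolding cycle_set hd_eP eX_def elf_def
    by (rule bij_betw_byWitness[where f' = "\<lambda>x. x - n"]) auto
qed (simp_all add: eV_def eE_def)

lemma lca_leaves:
  assumes "0 < c" "c < d" "d \<le> n"
  shows "lca eV eE (elf c) (elf d) = (if c \<le> k \<and> k < d \<and> d < n then 0 else c)"
proof (cases "c \<le> k \<and> k < d \<and> d < n")
  case True
  then have "0 < d - k" "d - k < length eQ - 1" "eQ ! (d - k) = d"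
    using eQ_nth[of "d - k"] length_eQ by (auto simp: n_def)
  moreover have "0 < c" "c < length eP - 1" "eP ! c = c" using True assms eP_nth length_eP by auto
  ultimately show ?thesis using cyc.lca_opposite_sides[of c "d - k"] True hd_eP by simp
next
  case False
  have "c \<in> {0..n} - {0}" "d \<in> {0..n} - {0}" "c \<noteq> d" using assms by auto
  moreover have "cyc.on_side c d"
  proof (cases "c \<le> k")
    case True
    then have "eP ! c = c" "eP ! (if d \<le> k then d else k + 1) = d"
      using False assms eP_nth eP_last by auto
    then show ?thesis
      unfolding cyc.on_side_def using True assms length_eP
      by (intro disjI1 exI[of _ c] exI[of _ "if d \<le> k then d else k + 1"]) auto
  next
    case c: False
    have "eQ ! (d - k) = d"
      using assms c eQ_nth[of "d - k"] eQ_last by (cases "d = n") (auto simp: n_def)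
    moreover have "eQ ! (c - k) = c" using assms c eQ_nth[of "c - k"] by (simp add: n_def)
    ultimately show ?thesis
      unfolding cyc.on_side_def using c assms length_eQ
      by (intro disjI2 exI[of _ "c - k"] exI[of _ "d - k"]) (auto simp: n_def)
  qed
  ultimately show ?thesis using False cyc.lca_same_side unfolding cycle_set hd_eP by auto
qed


definition labels :: "bool \<Rightarrow> bool list \<Rightarrow> bool list \<Rightarrow> nat \<Rightarrow> label" where
  "labels b ls1 ls2 w = (if n < w then Odot else label_of
     (if w = 0 then b else if w \<le> k then ls1 ! (w - 1) else if w < n then ls2 ! (w - k - 1) else False))"

lemma labels_L1:
  "labels b ls1 ls2 0 = L1 \<longleftrightarrow> b"
  "i < k \<Longrightarrow> labels b ls1 ls2 (Suc i) = L1 \<longleftrightarrow> ls1 ! i"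
  "j < m \<Longrightarrow> labels b ls1 ls2 (k + Suc j) = L1 \<longleftrightarrow> ls2 ! j"
  unfolding labels_def label_of_def n_def by auto

lemma labeled_network_labels: "labeled_network eV eE eX (labels b ls1 ls2)"
  unfolding labeled_network_def using cyc.network
  by (auto simp: labels_def label_of_def eV_def cycle_set eX_def)

lemma quasi_discriminating_labels:
  assumes "ls1 ! 0 \<noteq> b" "\<And>i. Suc i < k \<Longrightarrow> ls1 ! i \<noteq> ls1 ! Suc i"
    and "ls2 ! 0 \<noteq> b" "\<And>j. Suc j < m \<Longrightarrow> ls2 ! j \<noteq> ls2 ! Suc j"
  shows "quasi_discriminating eV eE eX (labels b ls1 ls2)"
proof (rule cyc.quasi_discriminatingI)
  fix i assume "Suc i < length eP - 1"
  then show "labels b ls1 ls2 (eP ! i) \<noteq> labels b ls1 ls2 (eP ! Suc i)"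
    using eP_nth[of i] eP_nth[of "Suc i"] length_eP assms(1) assms(2)[of "i - 1"]
    by (cases i) (auto simp: labels_def label_of_def n_def)
next
  fix j assume "Suc j < length eQ - 1"
  then show "labels b ls1 ls2 (eQ ! j) \<noteq> labels b ls1 ls2 (eQ ! Suc j)"
    using eQ_nth[of j] eQ_nth[of "Suc j"] length_eQ assms(3) assms(4)[of "j - 1"]
    by (cases j) (auto simp: labels_def label_of_def n_def)
qed

lemma explains_labels:
  assumes dist: "distinct (ys @ zs @ [v])" and set: "set (ys @ zs @ [v]) = fst G"
    and len: "length ys = k" "length zs = m"
    and ord: "caterpillar_order G (ys @ [v]) ls1" "caterpillar_order G (zs @ [v]) ls2"
    and cross: "\<forall>y\<in>set ys. \<forall>z\<in>set zs. {y, z} \<in> snd G \<longleftrightarrow> b"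
  shows "explains G eV eE eX (labels b ls1 ls2)"
proof -
  let ?ws = "ys @ zs @ [v]" and ?xs = "map elf [1..<n + 1]" and ?t = "labels b ls1 ls2"
  have ws_P: "?ws ! i = (ys @ [v]) ! i" "?ws ! i \<in> set ys" if "i < k" for i
    using that len by (auto simp: nth_append)
  have ws_Q: "?ws ! (k + j) = (zs @ [v]) ! j" "j < m \<Longrightarrow> ?ws ! (k + j) \<in> set zs" if "j \<le> m" for j
    using that len by (auto simp: nth_append)
  have xs: "?xs ! i = elf (Suc i)" if "i < n" for i
    using that by (simp del: upt_Suc)
  have "explains_via G eV eE eX ?t (\<lambda>a. ?xs ! list_pos ?ws a)"
  proof (rule explains_via_zip[OF dist set])
    show "distinct ?xs" "set ?xs = eX" by (fact leaves_list)+
    show "length ?ws = length ?xs" using len n_def k_pos by simp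
    fix i j assume ij: "i < j" "j < length ?ws"
    then have j: "j < n" using len n_def by simp
    have lca: "lca eV eE (?xs ! i) (?xs ! j) = (if i < k \<and> k \<le> j \<and> j < k + m then 0 else Suc i)"
      using lca_leaves[of "Suc i" "Suc j"] xs ij j by (auto simp: n_def)
    consider "i < k" "k \<le> j" "j < k + m" | "i < k" "j < k \<or> j = k + m" | "k \<le> i"
      using j n_def by linarith
    then show "{?ws ! i, ?ws ! j} \<in> snd G \<longleftrightarrow> ?t (lca eV eE (?xs ! i) (?xs ! j)) = L1"
    proof cases
      case 1
      then have "?ws ! i \<in> set ys" "?ws ! j \<in> set zs" using ws_P ws_Q[of "j - k"] by auto
      then show ?thesis using cross lca 1 labels_L1(1) by simp
    next
      case 2
      define j' where "j' = (if j < k then j else k)"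
      have "?ws ! j = (ys @ [v]) ! j'" "i < j'" "j' < length (ys @ [v])"
        using 2 ij ws_P ws_Q[of m] len unfolding j'_def by (auto simp: nth_append)
      then show ?thesis
        using caterpillar_order_adjacent[OF ord(1)] ws_P lca 2 labels_L1(2) by auto
    next
      case 3
      define i' j' where "i' = i - k" and "j' = j - k"
      then have "i = k + i'" "j = k + j'" "i' < j'" "j' \<le> m" using 3 ij j n_def by auto
      then show ?thesis
        using caterpillar_order_adjacent[OF ord(2), of i' j'] ws_Q lca labels_L1(3)[of i'] len
        by auto
    qed
  qed
  then show ?thesis unfolding explains_def by blast
qed

end

lemma strong_elementary_network_if_polar_order:
  assumes "polar_order G"
  shows "\<exists>(V::nat set) E X t. labeled_network V E X t \<and> elementary V E X \<and> strong V E X \<and>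
    quasi_discriminating V E X t \<and> explains G V E X t"
proof -
  obtain ys zs v ls1 ls2 b where dist: "distinct (ys @ zs @ [v])"
    and set: "set (ys @ zs @ [v]) = fst G"
    and len: "ys \<noteq> []" "zs \<noteq> []" "length ys + length zs \<ge> 3"
    and ord: "caterpillar_order G (ys @ [v]) ls1" "caterpillar_order G (zs @ [v]) ls2"
    and first: "ls1 ! 0 \<noteq> b" "ls2 ! 0 \<noteq> b"
    and cross: "\<forall>y\<in>set ys. \<forall>z\<in>set zs. {y, z} \<in> snd G \<longleftrightarrow> b"
    using assms unfolding polar_order_def by blast
  interpret standard_elementary "length ys" "length zs"
    using len by unfold_locales (auto simp: Suc_le_eq)
  have alternating: "\<And>i. Suc i < length ys \<Longrightarrow> ls1 ! i \<noteq> ls1 ! Suc i"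
    "\<And>j. Suc j < length zs \<Longrightarrow> ls2 ! j \<noteq> ls2 ! Suc j"
    using ord unfolding caterpillar_order_def by auto
  have "elementary eV eE eX"
    unfolding elementary_def using cyc.sides_elementary by blast
  moreover have "strong eV eE eX"
    using cyc.strong_if_long_sides length_eP length_eQ k_pos m_pos len(3) by auto
  ultimately show ?thesis
    using labeled_network_labels quasi_discriminating_labels[OF first(1) alternating(1) first(2) alternating(2)]
      explains_labels[OF dist set refl refl ord cross]
    by blast
qed

lemma polar_order_if_strong_elementary_network:
  assumes ln: "labeled_network V E X t" and el: "elementary V E X" and sg: "strong V E X"
    and qd: "quasi_discriminating V E X t" and "explains G V E X t"
  shows "polar_order G"
proof -
  obtain P Q where sides: "elementary_sides V E X P Q" using el unfolding elementary_def by blast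
  then obtain lf where "elementary_cycle P Q X lf V E" by (rule elementary_cycle_if_sides)
  then interpret elementary_cycle P Q X lf V E .
  have "\<not> weak_sides P Q" using sg sides unfolding strong_def by blast
  then have len: "length P \<ge> 3" "length Q \<ge> 3" "\<not> (length P = 3 \<and> length Q = 3)"
    using P_length Q_length unfolding weak_sides_def by auto
  obtain \<phi> where ex: "explains_via G V E X t \<phi>" using assms(5) unfolding explains_def by blast
  define \<psi> where "\<psi> = inv_into (fst G) \<phi> \<circ> lf"
  define ys where "ys = map \<psi> (butlast (tl P))"
  define zs where "zs = map \<psi> (butlast (tl Q))"
  have ord: "caterpillar_order G (ys @ [\<psi> h]) (map (\<lambda>c. t c = L1) (butlast (tl P)))"
    "caterpillar_order G (zs @ [\<psi> h]) (map (\<lambda>c. t c = L1) (butlast (tl Q)))"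
    using side_caterpillar_order[OF ln qd ex len(1)] tl_P_split
      elementary_cycle.side_caterpillar_order[OF swap_sides ln qd ex len(2)]
      elementary_cycle.tl_P_split[OF swap_sides] last_Q
    unfolding ys_def zs_def \<psi>_def by (metis list.map(1,2) map_append)+
  have bij: "bij_betw \<psi> (C - {r}) (fst G)"
    unfolding \<psi>_def using lf_bij bij_betw_inv_into ex unfolding explains_via_def
    by (blast intro: bij_betw_trans)
  have enum: "ys @ zs @ [\<psi> h] = map \<psi> (butlast (tl P) @ butlast (tl Q) @ [h])"
    unfolding ys_def zs_def by simp
  have vertices: "distinct (ys @ zs @ [\<psi> h])" "set (ys @ zs @ [\<psi> h]) = fst G"
    unfolding enum distinct_map set_map cycle_enumeration(2) using cycle_enumeration(1) bij
    by (auto simp: bij_betw_def)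
  have "length ys = length P - 2" "length zs = length Q - 2"
    unfolding ys_def zs_def by simp_all
  then have sizes: "ys \<noteq> []" "zs \<noteq> []" "length ys + length zs \<ge> 3" using len by auto
  have first: "(t r = L1) \<noteq> (t (P ! 1) = L1)" "(t r = L1) \<noteq> (t (Q ! 1) = L1)"
    using root_label_differs[OF ln qd len(1)] elementary_cycle.root_label_differs[OF swap_sides ln qd len(2)]
      hd_Q by simp_all
  have cross: "\<forall>y\<in>set ys. \<forall>z\<in>set zs. {y, z} \<in> snd G \<longleftrightarrow> t r = L1"
    using cross_adjacency[OF ex] unfolding ys_def zs_def \<psi>_def
    by (auto simp: in_set_conv_nth nth_butlast nth_tl)
  show ?thesis
    unfolding polar_order_def using ord vertices sizes first cross len
    by (intro exI[of _ ys] exI[of _ zs] exI[of _ "\<psi> h"] exI[of _ "map (\<lambda>c. t c = L1) (butlast (tl P))"]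
        exI[of _ "map (\<lambda>c. t c = L1) (butlast (tl Q))"] exI[of _ "t r = L1"])
      (auto simp: nth_butlast nth_tl)
qed

theorem mainTheorem8:
  fixes G :: "'a graph"
  assumes "is_graph G"
  shows "polar_cat G \<longleftrightarrow>
    (\<exists>(V::nat set) E X t. labeled_network V E X t \<and> elementary V E X \<and> strong V E X \<and>
        quasi_discriminating V E X t \<and> explains G V E X t)"
proof
  assume "polar_cat G"
  then show "\<exists>(V::nat set) E X t. labeled_network V E X t \<and> elementary V E X \<and> strong V E X \<and>
      quasi_discriminating V E X t \<and> explains G V E X t"
    using polar_order_if_polar_cat[OF assms] strong_elementary_network_if_polar_order by blast
next
  assume "\<exists>(V::nat set) E X t. labeled_network V E X t \<and> elementary V E X \<and> strong V E X \<and>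
      quasi_discriminating V E X t \<and> explains G V E X t"
  then show "polar_cat G"
    using polar_order_if_strong_elementary_network polar_cat_if_polar_order[OF assms] by blast
qed

end
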